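(* For every generator $A=(a_0;a_1,\dots,a_n;a_{n+1})$ of $\mathcal C_S$, the element $$T(A)=\sum_{(A_1,\dots,A_k)\ \text{cut of }A}[A_1|\cdots|A_k]\in B(\mathcal C_S)^0$$ (sum over all $k$-cuts for all $k\ge1$) satisfies $d\,T(A)=0$ in the bar construction $B(\mathcal C_S)$. Hence $T(A)$ defines an element of $H^0B(\mathcal C_S)(n)$.
   Context: $\mathcal C_S$ ($S$ a set) is the graded-commutative unital $\mathbb Q$-algebra freely generated by symbols $(a_0;a_1,\dots,a_n;a_{n+1})$, $n\ge1$, $a_i\in S$, each of cohomological degree 1 and Adams degree $n$. A 2-cut of $A=(a_0;a_1,\dots,a_n;a_{n+1})$ is, for $0\le i<j\le n$ with $(i,j)\ne(0,n)$, the ordered pair $(A',A'')$, $A'=(a_0;a_1,\dots,a_i,a_{j+1},\dots,a_n;a_{n+1})$, $A''=(a_i;a_{i+1},\dots,a_j;a_{j+1})$. The 1-cut of $A$ is $(A)$; for $k\ge2$ a $k$-cut is an ordered $k$-tuple obtained from a $(k-1)$-cut $(A_1,\dots,A_{k-1})$ by replacing one entry $A_l$ by the two consecutive entries $A_l',A_l''$ where $(A_l',A_l'')$ is a 2-cut of $A_l$. Cuts are recorded in terms of index positions (pieces are subsequences of positions $0,\dots,n+1$ of $A$), and "all cuts" means all $k$-cuts for all $k\ge1$. The differential on $\mathcal C_S$ is the derivation with $dA=-\sum_{\text{2-cuts}}A'A''$; $\mathcal C_S$ is augmented by sending all generators to $0$. Bar construction: for an augmented commutative DGA $\mathcal A$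 with augmentation ideal $\mathcal A^+$, $B(\mathcal A)=T(\mathcal A^+[1])$ with elements written $[x_1|\cdots|x_r]$ of degree $\sum(\deg x_i-1)$; with $J(x)=(-1)^{\deg x-1}x$, the differential is $d=d_{ext}+d_{int}$, $d_{ext}[x_1|\cdots|x_r]=\sum_{i}[Jx_1|\cdots|Jx_{i-1}|dx_i|x_{i+1}|\cdots|x_r]$, $d_{int}[x_1|\cdots|x_r]=\sum_{i=1}^{r-1}[Jx_1|\cdots|Jx_{i-1}|Jx_i\cdot x_{i+1}|x_{i+2}|\cdots|x_r]$. $H^0B(\mathcal A)(n)$ denotes the degree-0 cohomology in Adams degree $n$. *)

theory Defs
  imports Complex_Main "HOL-Library.Function_Algebras"
begin

text \<open>
  A generator (a_0; a_1,...,a_n; a_{n+1}) of C_S (n >= 1) is the list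
  [a_0,...,a_{n+1}] of length n+2 >= 3.  Since all generators have odd degree 1,
  the free graded-commutative Q-algebra C_S is the exterior algebra on the
  generators; a monomial is a word (list) of generators, the empty word being 1.
  A basis tensor [x_1|...|x_r] of B(C_S) with x_i monomials of the augmentation
  ideal is a list of nonempty words.  Elements of B(C_S) are represented by
  finitely supported formal Q-combinations of such lists of words (functions
  from lists of words to rat).  Two formal combinations represent the same
  element iff their difference is killed by all "alternated coefficient"
  functionals (graded-commutativity / exterior relations in each tensor slot).
\<close>

type_synonym 's gen = "'s list"
type_synonym 's word = "'s gen list"
type_synonym 's barb = "'s word list"
type_synonym 's fsum = "'s barb \<Rightarrow> rat"

definition single :: "'s barb \<Rightarrow> 's fsum" where
  "single b = (\<lambda>y. if y = b then 1 else 0)"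

definition smult :: "rat \<Rightarrow> 's fsum \<Rightarrow> 's fsum" where
  "smult c F = (\<lambda>y. c * F y)"

text \<open>2-cuts of a piece given by its list p of index positions
  (p = [p_0,...,p_{n+1}]): for 0 <= i < j <= n, (i,j) \<noteq> (0,n),
  A' = positions p_0..p_i, p_{j+1}..p_{n+1} and A'' = positions p_i..p_{j+1}.\<close>
definition cut2 :: "nat list \<Rightarrow> (nat list \<times> nat list) set" where
  "cut2 p = {(take (i+1) p @ drop (j+1) p, take (j+2-i) (drop i p)) | i j.
              i < j \<and> j \<le> length p - 2 \<and> (i, j) \<noteq> (0, length p - 2)}"

inductive_set cuts :: "nat list \<Rightarrow> nat list list set" for p where
  base: "[p] \<in> cuts p"
| step: "cs \<in> cuts p \<Longrightarrow> l < length cs \<Longrightarrow> (q1, q2) \<in> cut2 (cs ! l) \<Longrightarrow>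
          take l cs @ [q1, q2] @ drop (Suc l) cs \<in> cuts p"

definition Tcut :: "'s gen \<Rightarrow> 's fsum" where
  "Tcut A = (\<Sum>cs\<in>cuts [0..<length A]. single (map (\<lambda>q. [map (\<lambda>k. A ! k) q]) cs))"

text \<open>Sign of J x_1 ... J x_{i-1}: product of (-1)^(deg x_l - 1), l < i.\<close>
definition jsign :: "'s barb \<Rightarrow> nat \<Rightarrow> rat" where
  "jsign ws i = (\<Prod>l<i. (-1) ^ (length (ws ! l) - 1))"

text \<open>External differential on a basis tensor.  On C_S, d is the derivation with
  d A = - sum over 2-cuts A' A''; on a monomial g_0...g_{m-1},
  d = sum_j (-1)^j g_0 ... (d g_j) ... g_{m-1}.\<close>
definition dext :: "'s barb \<Rightarrow> 's fsum" where
  "dext ws = (\<Sum>i<length ws. \<Sum>j<length (ws ! i).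
      \<Sum>(p1, p2)\<in>cut2 [0..<length (ws ! i ! j)].
        smult (jsign ws i * (-1) * (-1) ^ j)
          (single (ws[i := take j (ws ! i)
                    @ [map (\<lambda>k. ws ! i ! j ! k) p1, map (\<lambda>k. ws ! i ! j ! k) p2]
                    @ drop (Suc j) (ws ! i)])))"

text \<open>Internal differential: [Jx_1|...|Jx_{i-1}|Jx_i . x_{i+1}|...].\<close>
definition dint :: "'s barb \<Rightarrow> 's fsum" where
  "dint ws = (\<Sum>i<length ws - 1.
      smult (jsign ws (Suc i))
        (single (take i ws @ [ws ! i @ ws ! Suc i] @ drop (Suc (Suc i)) ws)))"

definition dbasis :: "'s barb \<Rightarrow> 's fsum" where
  "dbasis ws = dext ws + dint ws"

definition dB :: "'s fsum \<Rightarrow> 's fsum" where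
  "dB F = (\<Sum>b\<in>{b. F b \<noteq> 0}. smult (F b) (dbasis b))"

text \<open>Sign relating two words of generators in the exterior algebra:
  u = \<plusminus> w as monomials; 0 if w has a repeated generator or u is not a
  rearrangement of w; otherwise the sign of the rearrangement (parity of
  the inversions).\<close>
definition permsign :: "'s word \<Rightarrow> 's word \<Rightarrow> rat" where
  "permsign u w = (if distinct u \<and> distinct w \<and> set u = set w
     then (-1) ^ card {(k, l). k < l \<and> l < length u \<and>
              (\<exists>a b. b < a \<and> a < length w \<and> u ! k = w ! a \<and> u ! l = w ! b)}
     else 0)"

definition slotsign :: "'s barb \<Rightarrow> 's barb \<Rightarrow> rat" where
  "slotsign vs ws = (if length vs = length ws
     then (\<Prod>i<length ws. permsign (vs ! i) (ws ! i)) else 0)"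

definition bar_zero :: "'s fsum \<Rightarrow> bool" where
  "bar_zero F = (\<forall>ws. (\<Sum>b\<in>{b. F b \<noteq> 0}. F b * slotsign b ws) = 0)"

end

theory Submission
  imports Defs
begin

(* Let N = length A.  A piece of a cut is recorded by the strictly
   increasing list of positions in {0..<N} it occupies; view it as a polygon with
   these vertices.  A 2-cut of a piece is the same as a chord (u,v) of that polygon
   other than its outer side (lo, hi): it splits the piece into an outer half and
   an inner half.

   1. Cuts have an intrinsic description: a list of pieces is a cut of [0..<N]
      iff it is "admissible" (pairwise non-crossing pieces, no piece before a piece
      containing it, every side of a piece that skips a position spanned by
      another piece, ...).  Admissibility is preserved by splitting a piece along
      a chord, by gluing a piece into the preceding piece containing it, and by
      swapping two adjacent pieces neither of which contains the other.
   2. Against a functional, d T(A) is minus a sum over (cut, slot, 2-cut of that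
      slot) from the external differential, plus a sum over (cut, pair of
      adjacent slots) from the internal one.  Splitting is a bijection from the
      first index set onto the adjacent pairs whose second piece is nested in the
      first; the remaining adjacent pairs cancel under the swap involution because
      the product of two generators is alternating (lemma cut_cancellation).
   3. Elements of B(C_S) are formal sums modulo the functionals slotsign _ w;
      evaluating these functionals is linear, so bar_zero (dB (Tcut A)) reduces to
      the identity of step 2, which proves mainTheorem2. *)

section \<open>Pieces: strictly increasing lists of positions\<close>

definition lo :: "nat list \<Rightarrow> nat" where "lo X = Min (set X)"
definition hi :: "nat list \<Rightarrow> nat" where "hi X = Max (set X)"

definition piece :: "nat \<Rightarrow> nat list \<Rightarrow> bool" where
  "piece N X \<longleftrightarrow> sorted_wrt (<) X \<and> 3 \<le> length X \<and> set X \<subseteq> {..<N}"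

definition edge :: "nat list \<Rightarrow> nat \<Rightarrow> nat \<Rightarrow> bool" where
  "edge X a b \<longleftrightarrow> a \<in> set X \<and> b \<in> set X \<and> a < b \<and> (\<forall>x\<in>set X. x \<le> a \<or> b \<le> x)"

lemma piece_basic:
  assumes "piece N X"
  shows "lo X \<in> set X" "hi X \<in> set X" "\<And>x. x \<in> set X \<Longrightarrow> lo X \<le> x \<and> x \<le> hi X"
    "lo X < hi X" "\<exists>x\<in>set X. lo X < x \<and> x < hi X"
    "sorted_wrt (<) X" "X \<noteq> []"
proof -
  have s: "sorted_wrt (<) X" and l: "3 \<le> length X" using assms by (auto simp: piece_def)
  have c: "card (set X) = length X" using s by (simp add: strict_sorted_iff distinct_card)
  have ne: "set X \<noteq> {}" using l by auto
  show "lo X \<in> set X" "hi X \<in> set X" using ne by (auto simp: lo_def hi_def)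
  show "\<And>x. x \<in> set X \<Longrightarrow> lo X \<le> x \<and> x \<le> hi X" by (auto simp: lo_def hi_def)
  have "card (set X - {lo X, hi X}) \<ge> 1"
  proof -
    have "card (set X - {lo X, hi X}) \<ge> card (set X) - card {lo X, hi X}"
      by (rule diff_card_le_card_Diff) simp
    moreover have "card {lo X, hi X} \<le> 2" by (simp add: card_insert_le_m1)
    ultimately show ?thesis using c l by linarith
  qed
  then have "set X - {lo X, hi X} \<noteq> {}" by (metis card.empty not_one_le_zero)
  then obtain x where x: "x \<in> set X" "x \<noteq> lo X" "x \<noteq> hi X" by blast
  moreover have "lo X \<le> x" "x \<le> hi X" using x by (auto simp: lo_def hi_def)
  ultimately show "\<exists>x\<in>set X. lo X < x \<and> x < hi X"
    by (intro bexI[of _ x]) (auto simp: order.strict_iff_order)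
  then show "lo X < hi X" by auto
  show "sorted_wrt (<) X" "X \<noteq> []" using s l by auto
qed

lemma lo_eqI: "a \<in> set X \<Longrightarrow> (\<And>x. x \<in> set X \<Longrightarrow> a \<le> x) \<Longrightarrow> lo X = a"
  unfolding lo_def by (rule Min_eqI) auto

lemma hi_eqI: "a \<in> set X \<Longrightarrow> (\<And>x. x \<in> set X \<Longrightarrow> x \<le> a) \<Longrightarrow> hi X = a"
  unfolding hi_def by (rule Max_eqI) auto

lemma piece_intro:
  assumes "sorted_wrt (<) X" "set X \<subseteq> {..<N}" "a \<in> set X" "b \<in> set X" "c \<in> set X" "a < b" "b < c"
  shows "piece N X"
proof -
  have "card {a, b, c} = 3" using assms by auto
  moreover have "card {a, b, c} \<le> card (set X)" using assms by (intro card_mono) auto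
  moreover have "card (set X) = length X" using assms(1) by (simp add: strict_sorted_iff distinct_card)
  ultimately show ?thesis using assms unfolding piece_def by simp
qed

lemma edge_whole: "piece N Y \<Longrightarrow> edge Y a b \<Longrightarrow> a \<le> lo Y \<Longrightarrow> hi Y \<le> b \<Longrightarrow> False"
  using piece_basic(5)[of N Y] unfolding edge_def by force

lemma edges_disj:
  assumes "edge X e f" "edge X a b" "(e, f) \<noteq> (a, b)"
  shows "f \<le> a \<or> b \<le> e"
  using assms unfolding edge_def by (metis le_antisym not_le)

section \<open>2-cuts of a piece are chords\<close>

lemma sorted_idx_less:
  fixes P :: "nat list"
  assumes "sorted_wrt (<) P" "a < length P" "b < length P"
  shows "P!a < P!b \<longleftrightarrow> a < b"
proof
  assume h: "P!a < P!b"
  show "a < b"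
  proof (rule ccontr)
    assume "\<not> a < b"
    then have "b \<le> a" by simp
    then have "P!b \<le> P!a"
      using sorted_wrt_nth_less[OF assms(1) _ assms(2)] by (cases "b = a") (auto intro: less_imp_le)
    then show False using h by simp
  qed
next
  assume "a < b" then show "P!a < P!b" using sorted_wrt_nth_less[OF assms(1) _ assms(3)] by simp
qed

lemma sorted_idx_le:
  "sorted_wrt (<) (P::nat list) \<Longrightarrow> a < length P \<Longrightarrow> b < length P \<Longrightarrow> P!a \<le> P!b \<longleftrightarrow> a \<le> b"
  using sorted_idx_less[of P b a] by linarith

lemma lo_hd: "sorted_wrt (<) X \<Longrightarrow> X \<noteq> [] \<Longrightarrow> lo X = hd X"
  unfolding lo_def by (cases X) (auto intro!: Min_eqI)

lemma hi_last: "sorted_wrt (<) X \<Longrightarrow> X \<noteq> [] \<Longrightarrow> hi X = last X"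
  unfolding hi_def
proof (induction X rule: rev_induct)
  case (snoc x xs) thus ?case by (auto simp: sorted_wrt_append intro!: Max_eqI)
qed simp

lemma set_take_sorted:
  fixes P :: "nat list"
  assumes "sorted_wrt (<) P" "i < length P"
  shows "set (take (Suc i) P) = {x\<in>set P. x \<le> P!i}"
proof -
  have "x \<in> set (take (Suc i) P) \<longleftrightarrow> (\<exists>m<length P. m \<le> i \<and> x = P!m)" for x
    by (auto simp: in_set_conv_nth)
  moreover have "x \<in> set P \<and> x \<le> P!i \<longleftrightarrow> (\<exists>m<length P. m \<le> i \<and> x = P!m)" for x
    using sorted_idx_le[OF assms(1) _ assms(2)] by (auto simp: in_set_conv_nth)
  ultimately show ?thesis by blast
qed

lemma set_drop_sorted:
  fixes P :: "nat list"
  assumes "sorted_wrt (<) P" "i < length P"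
  shows "set (drop i P) = {x\<in>set P. P!i \<le> x}"
proof -
  have "x \<in> set (drop i P) \<longleftrightarrow> (\<exists>m<length P. i \<le> m \<and> x = P!m)" for x
  proof
    assume "x \<in> set (drop i P)"
    then obtain k where "k < length P - i" "x = P ! (i + k)" by (auto simp: in_set_conv_nth)
    then show "\<exists>m<length P. i \<le> m \<and> x = P!m" by (intro exI[of _ "i + k"]) auto
  next
    assume "\<exists>m<length P. i \<le> m \<and> x = P!m"
    then obtain m where "m < length P" "i \<le> m" "x = P!m" by blast
    then show "x \<in> set (drop i P)" by (auto simp: in_set_conv_nth intro!: exI[of _ "m - i"])
  qed
  moreover have "x \<in> set P \<and> P!i \<le> x \<longleftrightarrow> (\<exists>m<length P. i \<le> m \<and> x = P!m)" for x
    using sorted_idx_le[OF assms(1) assms(2)] by (auto simp: in_set_conv_nth)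
  ultimately show ?thesis by blast
qed
lemma cut2_as_filters:
  fixes P :: "nat list"
  assumes s: "sorted_wrt (<) P" and ij: "i < j" "Suc j < length P"
  shows "take (Suc i) P @ drop (Suc j) P = filter (\<lambda>x. x \<le> P!i \<or> P!(Suc j) \<le> x) P"
    and "take (Suc (Suc j) - i) (drop i P) = filter (\<lambda>x. P!i \<le> x \<and> x \<le> P!(Suc j)) P"
proof -
  have lt: "P!i < P!(Suc j)" using sorted_idx_less[OF s] ij by simp
  have st: "set (take (Suc i) P) = {x\<in>set P. x \<le> P!i}"
    using set_take_sorted[OF s, of i] ij by simp
  have sd: "set (drop (Suc j) P) = {x\<in>set P. P!(Suc j) \<le> x}"
    using set_drop_sorted[OF s, of "Suc j"] ij by simp
  have a: "sorted_wrt (<) (take (Suc i) P @ drop (Suc j) P)"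
    unfolding sorted_wrt_append using s st sd lt by (auto intro: sorted_wrt_take sorted_wrt_drop)
  have b: "sorted_wrt (<) (filter (\<lambda>x. x \<le> P!i \<or> P!(Suc j) \<le> x) P)"
    using s by (rule sorted_wrt_filter)
  have c: "set (filter (\<lambda>x. x \<le> P!i \<or> P!(Suc j) \<le> x) P) = set (take (Suc i) P @ drop (Suc j) P)"
    using st sd by auto
  show "take (Suc i) P @ drop (Suc j) P = filter (\<lambda>x. x \<le> P!i \<or> P!(Suc j) \<le> x) P"
    using strict_sorted_equal[OF a b c] by simp
  have e: "take (Suc (Suc j) - i) (drop i P) = drop i (take (Suc (Suc j)) P)"
    using ij by (simp add: take_drop)
  let ?L = "take (Suc (Suc j)) P"
  have sL: "sorted_wrt (<) ?L" using s by (rule sorted_wrt_take)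
  have setL: "set ?L = {x\<in>set P. x \<le> P!(Suc j)}"
    using set_take_sorted[OF s, of "Suc j"] ij by simp
  have Li: "?L ! i = P ! i" using ij by simp
  have sdL: "set (drop i ?L) = {x\<in>set ?L. P!i \<le> x}"
    using set_drop_sorted[OF sL, of i] ij Li by simp
  show "take (Suc (Suc j) - i) (drop i P) = filter (\<lambda>x. P!i \<le> x \<and> x \<le> P!(Suc j)) P"
  proof -
    have a: "sorted_wrt (<) (drop i ?L)" using sL by (rule sorted_wrt_drop)
    have b: "sorted_wrt (<) (filter (\<lambda>x. P!i \<le> x \<and> x \<le> P!(Suc j)) P)"
      using s by (rule sorted_wrt_filter)
    have c: "set (filter (\<lambda>x. P!i \<le> x \<and> x \<le> P!(Suc j)) P) = set (drop i ?L)"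
      using sdL setL by auto
    show ?thesis unfolding e using strict_sorted_equal[OF a b c] by simp
  qed
qed

definition chord :: "nat list \<Rightarrow> nat \<Rightarrow> nat \<Rightarrow> nat list \<Rightarrow> nat list \<Rightarrow> bool" where
  "chord P u v q1 q2 \<longleftrightarrow> u \<in> set P \<and> v \<in> set P \<and> u < v \<and> (\<exists>x\<in>set P. u < x \<and> x < v)
     \<and> \<not> (u = lo P \<and> v = hi P)
     \<and> q1 = filter (\<lambda>x. x \<le> u \<or> v \<le> x) P \<and> q2 = filter (\<lambda>x. u \<le> x \<and> x \<le> v) P"

lemma sorted_outer_side:
  assumes s: "sorted_wrt (<) P" and "i < length P" "k < length P"
  shows "P!i = lo P \<and> P!k = hi P \<longleftrightarrow> i = 0 \<and> k = length P - 1"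
proof -
  have ne: "P \<noteq> []" using assms by auto
  have "lo P = P!0" "hi P = P!(length P - 1)"
    using lo_hd[OF s ne] hi_last[OF s ne] by (simp_all add: hd_conv_nth last_conv_nth ne)
  moreover have "distinct P" using s by (simp add: strict_sorted_iff)
  ultimately show ?thesis
    using nth_eq_iff_index_eq[of P i 0] nth_eq_iff_index_eq[of P k "length P - 1"] assms ne by auto
qed

lemma cut2_char:
  fixes P :: "nat list"
  assumes s: "sorted_wrt (<) P"
  shows "(q1, q2) \<in> cut2 P \<longleftrightarrow> (\<exists>u v. chord P u v q1 q2)"
proof
  assume "(q1, q2) \<in> cut2 P"
  then obtain i j where q: "q1 = take (i+1) P @ drop (j+1) P" "q2 = take (j+2-i) (drop i P)"
    and c: "i < j" "j \<le> length P - 2" "(i, j) \<noteq> (0, length P - 2)"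
    unfolding cut2_def by blast
  have len: "Suc j < length P" using c by linarith
  have q': "q1 = filter (\<lambda>x. x \<le> P!i \<or> P!(Suc j) \<le> x) P"
     "q2 = filter (\<lambda>x. P!i \<le> x \<and> x \<le> P!(Suc j)) P"
    using cut2_as_filters[OF s c(1) len] q by simp_all
  have "chord P (P!i) (P!(Suc j)) q1 q2"
    unfolding chord_def
  proof (intro conjI q')
    show "P!i \<in> set P" "P!(Suc j) \<in> set P" using len c by auto
    show "P!i < P!(Suc j)" using sorted_idx_less[OF s] len c by simp
    show "\<exists>x\<in>set P. P!i < x \<and> x < P!(Suc j)"
      using sorted_idx_less[OF s, of i j] sorted_idx_less[OF s, of j "Suc j"] len c
      by (intro bexI[of _ "P!j"]) auto
    show "\<not> (P!i = lo P \<and> P!(Suc j) = hi P)"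
      using sorted_outer_side[OF s, of i "Suc j"] len c by auto
  qed
  then show "\<exists>u v. chord P u v q1 q2" by blast
next
  assume "\<exists>u v. chord P u v q1 q2"
  then obtain u v where ch: "chord P u v q1 q2" by blast
  then obtain i k where ik: "i < length P" "u = P!i" "k < length P" "v = P!k"
    unfolding chord_def by (auto simp: in_set_conv_nth)
  from ch obtain x where x: "x \<in> set P" "u < x" "x < v" unfolding chord_def by blast
  then obtain m where m: "m < length P" "x = P!m" by (auto simp: in_set_conv_nth)
  have im: "i < m" and mk: "m < k" using sorted_idx_less[OF s] ik m x by auto
  define j where "j = k - 1"
  have kj: "k = Suc j" using mk j_def by simp
  have ij: "i < j" using im mk kj by simp
  have len: "Suc j < length P" using ik kj by simp
  have q': "q1 = take (i+1) P @ drop (j+1) P" "q2 = take (j+2-i) (drop i P)"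
    using cut2_as_filters[OF s ij len] ch ik kj unfolding chord_def by simp_all
  have nb: "(i, j) \<noteq> (0, length P - 2)"
    using sorted_outer_side[OF s ik(1,3)] ch ik kj len unfolding chord_def by auto
  show "(q1, q2) \<in> cut2 P"
    unfolding cut2_def using q' ij len nb by fastforce
qed

lemma chord_props:
  assumes w: "piece N P" and ch: "chord P u v q1 q2"
  shows "set q1 = {x\<in>set P. x \<le> u \<or> v \<le> x}" "set q2 = {x\<in>set P. u \<le> x \<and> x \<le> v}"
    "lo P \<le> u" "v \<le> hi P" "u < v" "u \<in> set P" "v \<in> set P"
    "lo q1 = lo P" "hi q1 = hi P" "lo q2 = u" "hi q2 = v"
    "piece N q1" "piece N q2" "edge q1 u v" "set q1 \<union> set q2 = set P" "\<not> (u = lo P \<and> v = hi P)"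
proof -
  note b = piece_basic[OF w]
  have q: "q1 = filter (\<lambda>x. x \<le> u \<or> v \<le> x) P" "q2 = filter (\<lambda>x. u \<le> x \<and> x \<le> v) P"
    and uv: "u \<in> set P" "v \<in> set P" "u < v" and nb: "\<not> (u = lo P \<and> v = hi P)"
    using ch unfolding chord_def by auto
  from ch obtain x where x: "x \<in> set P" "u < x" "x < v" unfolding chord_def by blast
  show s1: "set q1 = {x\<in>set P. x \<le> u \<or> v \<le> x}" "set q2 = {x\<in>set P. u \<le> x \<and> x \<le> v}"
    using q by auto
  show "lo P \<le> u" "v \<le> hi P" "u < v" "u \<in> set P" "v \<in> set P" "\<not> (u = lo P \<and> v = hi P)"
    using b(3) uv nb by auto
  show l1: "lo q1 = lo P" using s1 b(1,3) uv by (intro lo_eqI) auto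
  show h1: "hi q1 = hi P" using s1 b(2,3) uv by (intro hi_eqI) auto
  show "lo q2 = u" using s1 uv by (intro lo_eqI) auto
  show "hi q2 = v" using s1 uv by (intro hi_eqI) auto
  have sq: "sorted_wrt (<) q1" "sorted_wrt (<) q2" using q b(6) by (auto intro: sorted_wrt_filter)
  have sub: "set q1 \<subseteq> {..<N}" "set q2 \<subseteq> {..<N}" using q w unfolding piece_def by auto
  show "piece N q2" using sq(2) sub(2) s1(2) x uv by (intro piece_intro[of _ _ u x v]) auto
  show "piece N q1"
  proof (cases "u = lo P")
    case True
    then have "v < hi P" using nb b(3) uv by (metis order.order_iff_strict)
    then show ?thesis using sq(1) sub(1) s1(1) uv b(2) by (intro piece_intro[of _ _ u v "hi P"]) auto
  next
    case False
    then have "lo P < u" using b(3) uv by (metis order.order_iff_strict)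
    then show ?thesis using sq(1) sub(1) s1(1) uv b(1) by (intro piece_intro[of _ _ "lo P" u v]) auto
  qed
  show "edge q1 u v" unfolding edge_def using s1 uv by auto
  show "set q1 \<union> set q2 = set P" using s1 by auto
qed

lemma chord_edges_inner:
  assumes wq: "piece N Q" and ch: "chord Q u v q1 q2" and e: "edge q2 a b"
  shows "edge Q a b"
proof -
  have s2: "set q2 = {x\<in>set Q. u \<le> x \<and> x \<le> v}" using chord_props(2)[OF wq ch] .
  have ab: "a \<in> set q2" "b \<in> set q2" "a < b" and gap: "\<forall>x\<in>set q2. x \<le> a \<or> b \<le> x"
    using e unfolding edge_def by auto
  then have "u \<le> a" "b \<le> v" using s2 by auto
  then have "\<forall>x\<in>set Q. x \<le> a \<or> b \<le> x" using gap s2 by fastforce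
  then show ?thesis using ab s2 unfolding edge_def by auto
qed

lemma chord_edges_outer:
  assumes wq: "piece N Q" and ch: "chord Q u v q1 q2" and e: "edge q1 a b"
  shows "(a = u \<and> b = v) \<or> edge Q a b"
proof (rule ccontr)
  note cp = chord_props[OF wq ch]
  have s1: "set q1 = {x\<in>set Q. x \<le> u \<or> v \<le> x}" using cp(1) .
  assume nn: "\<not> ((a = u \<and> b = v) \<or> edge Q a b)"
  have ab: "a \<in> set q1" "b \<in> set q1" "a < b" and bet: "\<forall>x\<in>set q1. x \<le> a \<or> b \<le> x"
    using e unfolding edge_def by auto
  have abQ: "a \<in> set Q" "b \<in> set Q" using ab s1 by auto
  have "\<exists>x\<in>set Q. a < x \<and> x < b" using nn abQ ab(3) unfolding edge_def by (auto simp: not_le)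
  then obtain x where x: "x \<in> set Q" "a < x" "x < b" by blast
  have "x \<notin> set q1" using bet x by auto
  then have ux: "u < x" "x < v" using x s1 by auto
  have "a \<le> u \<or> v \<le> a" using ab(1) s1 by auto
  then have au: "a \<le> u" using x ux by auto
  have "b \<le> u \<or> v \<le> b" using ab(2) s1 by auto
  then have bv: "v \<le> b" using x ux by auto
  have "u \<in> set q1" "v \<in> set q1" using cp(5,6,7) s1 by auto
  then have "u \<le> a \<or> b \<le> u" "v \<le> a \<or> b \<le> v" using bet by auto
  then have "a = u" "b = v" using au bv ab(3) cp(5) by auto
  then show False using nn by blast
qed

lemma merge_chord:
  assumes wX: "piece N X" and wY: "piece N Y" and eab: "edge X a b"
    and spanY: "lo Y = a" "hi Y = b"
  defines "M \<equiv> sorted_list_of_set (set X \<union> set Y)"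
  shows "chord M a b X Y" "piece N M"
proof -
  note bX = piece_basic[OF wX] and bY = piece_basic[OF wY]
  have ab: "a \<in> set X" "b \<in> set X" "a < b" "\<forall>x\<in>set X. x \<le> a \<or> b \<le> x"
    using eab unfolding edge_def by auto
  have Ysub: "\<forall>y\<in>set Y. a \<le> y \<and> y \<le> b" using bY(3) spanY by auto
  have abY: "a \<in> set Y" "b \<in> set Y" using bY(1,2) spanY by auto
  have sM: "sorted_wrt (<) M" and setM: "set M = set X \<union> set Y" unfolding M_def by auto
  have loM: "lo M = lo X"
    using setM bX(1,3) Ysub ab by (intro lo_eqI) (auto, meson le_trans)
  have hiM: "hi M = hi X"
    using setM bX(2,3) Ysub ab by (intro hi_eqI) (auto, meson le_trans)
  have X_eq: "X = filter (\<lambda>x. x \<le> a \<or> b \<le> x) M"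
  proof -
    have "set (filter (\<lambda>x. x \<le> a \<or> b \<le> x) M) = set X" using setM ab Ysub abY by auto
    then show ?thesis using strict_sorted_equal[OF bX(6) sorted_wrt_filter[OF sM]] by simp
  qed
  have Y_eq: "Y = filter (\<lambda>x. a \<le> x \<and> x \<le> b) M"
  proof -
    have "set (filter (\<lambda>x. a \<le> x \<and> x \<le> b) M) = set Y" using setM ab Ysub abY by auto
    then show ?thesis using strict_sorted_equal[OF bY(6) sorted_wrt_filter[OF sM]] by simp
  qed
  show "chord M a b X Y"
    unfolding chord_def
  proof (intro conjI X_eq Y_eq)
    show "a \<in> set M" "b \<in> set M" "a < b" using setM ab by auto
    obtain x where "x \<in> set Y" "lo Y < x" "x < hi Y" using bY(5) by blast
    then show "\<exists>x\<in>set M. a < x \<and> x < b" using setM spanY by auto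
    show "\<not> (a = lo M \<and> b = hi M)" using edge_whole[OF wX eab] loM hiM by auto
  qed
  obtain x where "x \<in> set X" "lo X < x" "x < hi X" using bX(5) by blast
  moreover have "set M \<subseteq> {..<N}" using setM wX wY unfolding piece_def by auto
  ultimately show "piece N M" using sM setM bX(1,2) by (intro piece_intro[of _ _ "lo X" x "hi X"]) auto
qed

lemma chord_edges_merge:
  assumes wM: "piece N M" and ch: "chord M a b X Y" and eM: "edge M e f"
  shows "(e, f) \<noteq> (a, b) \<and> (edge X e f \<or> edge Y e f)"
proof -
  note cp = chord_props[OF wM ch]
  have efM: "e \<in> set M" "f \<in> set M" "e < f" and gap: "\<forall>m\<in>set M. m \<le> e \<or> f \<le> m"
    using eM unfolding edge_def by auto
  have ne: "(e, f) \<noteq> (a, b)"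
  proof
    assume "(e, f) = (a, b)"
    moreover obtain x where "x \<in> set M" "a < x" "x < b" using ch unfolding chord_def by blast
    ultimately show False using gap by force
  qed
  have ae: "a \<le> e \<or> f \<le> a" and be: "b \<le> e \<or> f \<le> b" using gap cp(6,7) by auto
  show ?thesis
  proof (cases "a \<le> e \<and> f \<le> b")
    case True
    then have "edge Y e f" using efM gap cp(2) unfolding edge_def by auto
    then show ?thesis using ne by simp
  next
    case False
    then have "e \<le> a \<or> b \<le> e" "f \<le> a \<or> b \<le> f" using ae be efM(3) by linarith+
    then have "edge X e f" using efM gap cp(1) unfolding edge_def by auto
    then show ?thesis using ne by simp
  qed
qed

section \<open>Compatible pieces and admissible lists of pieces\<close>

definition nest :: "nat list \<Rightarrow> nat list \<Rightarrow> bool" where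
  "nest Y X \<longleftrightarrow> lo X \<le> lo Y \<and> hi Y \<le> hi X \<and> (lo Y \<noteq> lo X \<or> hi Y \<noteq> hi X)"
definition inside_edge :: "nat list \<Rightarrow> nat list \<Rightarrow> bool" where
  "inside_edge Y X \<longleftrightarrow> (\<exists>a b. edge X a b \<and> a \<le> lo Y \<and> hi Y \<le> b)"
definition disjoint_spans :: "nat list \<Rightarrow> nat list \<Rightarrow> bool" where
  "disjoint_spans X Y \<longleftrightarrow> hi X \<le> lo Y \<or> hi Y \<le> lo X"

text \<open>Two pieces of one cut never cross: this is the compatibility relation.\<close>
definition compatible :: "nat list \<Rightarrow> nat list \<Rightarrow> bool" where
  "compatible X Y \<longleftrightarrow> disjoint_spans X Y \<or> inside_edge X Y \<or> inside_edge Y X"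

lemma compatible_sym: "compatible X Y \<longleftrightarrow> compatible Y X"
  unfolding compatible_def disjoint_spans_def by auto

lemma compatible_span_distinct:
  assumes "piece N X" "piece N Y" "compatible X Y" "lo X = lo Y" "hi X = hi Y"
  shows False
proof -
  note bx = piece_basic[OF assms(1)] and bY = piece_basic[OF assms(2)]
  consider "disjoint_spans X Y" | "inside_edge X Y" | "inside_edge Y X" using assms(3) unfolding compatible_def by blast
  then show False
  proof cases
    case 1 then show ?thesis using bx(4) bY(4) assms unfolding disjoint_spans_def by auto
  next
    case 2
    then obtain a b where "edge Y a b" "a \<le> lo X" "hi X \<le> b" unfolding inside_edge_def by blast
    then show ?thesis using edge_whole[OF assms(2)] assms by auto
  next
    case 3
    then obtain a b where "edge X a b" "a \<le> lo Y" "hi Y \<le> b" unfolding inside_edge_def by blast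
    then show ?thesis using edge_whole[OF assms(1)] assms by auto
  qed
qed

lemma compatible_covers_chord:
  assumes wz: "piece N Z" and wq: "piece N Q" and st: "compatible Z Q" and ch: "chord Q u v q1 q2"
    and h: "lo Z \<le> u" "v \<le> hi Z"
  shows "lo Z \<le> lo Q \<and> hi Q \<le> hi Z"
proof -
  note cp = chord_props[OF wq ch]
  from ch obtain x where x: "x \<in> set Q" "u < x" "x < v" unfolding chord_def by blast
  note bz = piece_basic[OF wz]
  consider "disjoint_spans Z Q" | "inside_edge Z Q" | "inside_edge Q Z" using st unfolding compatible_def by blast
  then show ?thesis
  proof cases
    case 1 then show ?thesis using cp h unfolding disjoint_spans_def by auto
  next
    case 2
    then obtain a b where "edge Q a b" "a \<le> lo Z" "hi Z \<le> b" unfolding inside_edge_def by blast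
    then show ?thesis using x h unfolding edge_def by force
  next
    case 3
    then obtain a b where "edge Z a b" "a \<le> lo Q" "hi Q \<le> b" unfolding inside_edge_def by blast
    then show ?thesis using bz(3) unfolding edge_def by force
  qed
qed

lemma compatible_split:
  assumes wz: "piece N Z" and wq: "piece N Q" and st: "compatible Z Q" and ch: "chord Q u v q1 q2"
  shows "compatible Z q1 \<and> compatible Z q2"
proof -
  note cp = chord_props[OF wq ch]
  note bq = piece_basic[OF wq]
  consider "disjoint_spans Z Q" | "inside_edge Z Q" | "inside_edge Q Z" using st unfolding compatible_def by blast
  then show ?thesis
  proof cases
    case 1 then show ?thesis using cp(3,4,8,9,10,11) unfolding disjoint_spans_def compatible_def by auto
  next
    case 3
    then obtain a b where e: "edge Z a b" "a \<le> lo Q" "hi Q \<le> b" unfolding inside_edge_def by blast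
    have "inside_edge q1 Z" unfolding inside_edge_def using e cp(8,9) by (intro exI[of _ a] exI[of _ b]) auto
    moreover have "inside_edge q2 Z" unfolding inside_edge_def using e cp(3,4,10,11)
      by (intro exI[of _ a] exI[of _ b]) auto
    ultimately show ?thesis unfolding compatible_def by blast
  next
    case 2
    then obtain a b where e: "edge Q a b" "a \<le> lo Z" "hi Z \<le> b" unfolding inside_edge_def by blast
    have ab: "a \<in> set Q" "b \<in> set Q" "a < b" using e(1) unfolding edge_def by auto
    consider "u \<le> a \<and> b \<le> v" | "b \<le> u" | "v \<le> a" using e(1) cp(5,6,7) unfolding edge_def by force
    then show ?thesis
    proof cases
      case 1
      have "edge q2 a b" using e(1) 1 cp(2) ab unfolding edge_def by auto
      then have i2: "inside_edge Z q2" using e unfolding inside_edge_def by blast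
      have "inside_edge Z q1" using cp(14) 1 e unfolding inside_edge_def by (intro exI[of _ u] exI[of _ v]) auto
      then show ?thesis using i2 unfolding compatible_def by blast
    next
      case 2
      have "edge q1 a b" using e(1) 2 cp(1) ab unfolding edge_def by auto
      then have i1: "inside_edge Z q1" using e unfolding inside_edge_def by blast
      have "disjoint_spans Z q2" using cp(10) 2 e unfolding disjoint_spans_def by auto
      then show ?thesis using i1 unfolding compatible_def by blast
    next
      case 3
      have "edge q1 a b" using e(1) 3 cp(1) ab unfolding edge_def by auto
      then have i1: "inside_edge Z q1" using e unfolding inside_edge_def by blast
      have "disjoint_spans Z q2" using cp(11) 3 e unfolding disjoint_spans_def by auto
      then show ?thesis using i1 unfolding compatible_def by blast
    qed
  qed
qed

lemma compatible_merge:
  assumes wZ: "piece N Z" and wM: "piece N M" and ch: "chord M a b X Y"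
    and sZX: "compatible Z X" and sZY: "compatible Z Y"
  shows "compatible Z M"
proof -
  note cp = chord_props[OF wM ch] and bZ = piece_basic[OF wZ]
  consider "disjoint_spans Z X" | "inside_edge Z X" | "inside_edge X Z"
    using sZX unfolding compatible_def by blast
  then show ?thesis
  proof cases
    case 1 then show ?thesis using cp(8,9) unfolding compatible_def disjoint_spans_def by auto
  next
    case 3 then show ?thesis using cp(8,9) unfolding compatible_def inside_edge_def by auto
  next
    case 2
    then obtain e f where ef: "edge X e f" "e \<le> lo Z" "hi Z \<le> f" unfolding inside_edge_def by blast
    show ?thesis
    proof (cases "(e, f) = (a, b)")
      case False
      have "f \<le> a \<or> b \<le> e" using edges_disj[OF ef(1) cp(14) False] .
      then have "edge M e f" using ef(1) cp(2,15) unfolding edge_def by auto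
      then show ?thesis using ef unfolding compatible_def inside_edge_def by blast
    next
      case True
      then have Zab: "a \<le> lo Z" "hi Z \<le> b" using ef by auto
      consider "disjoint_spans Z Y" | "inside_edge Z Y" | "inside_edge Y Z"
        using sZY unfolding compatible_def by blast
      then show ?thesis
      proof cases
        case 1 then show ?thesis using Zab cp(10,11) bZ(4) unfolding disjoint_spans_def by auto
      next
        case 3
        then obtain g h where gh: "edge Z g h" "g \<le> lo Y" "hi Y \<le> h" unfolding inside_edge_def by blast
        have "lo Z \<le> g" "h \<le> hi Z" using gh(1) bZ(3) unfolding edge_def by auto
        then show ?thesis using edge_whole[OF wZ gh(1)] gh cp(10,11) Zab by auto
      next
        case 2
        then obtain g h where gh: "edge Y g h" "g \<le> lo Z" "hi Z \<le> h" unfolding inside_edge_def by blast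
        have "edge M g h" using chord_edges_inner[OF wM ch gh(1)] .
        then show ?thesis using gh unfolding compatible_def inside_edge_def by blast
      qed
    qed
  qed
qed

definition sides_spanned :: "nat list list \<Rightarrow> bool" where
  "sides_spanned c \<longleftrightarrow>
     (\<forall>X\<in>set c. \<forall>a b. edge X a b \<and> Suc a < b \<longrightarrow> (\<exists>Z\<in>set c. lo Z = a \<and> hi Z = b))"

definition may_precede :: "nat list \<Rightarrow> nat list \<Rightarrow> bool" where
  "may_precede X Y \<longleftrightarrow> \<not> nest X Y"

definition admissible :: "nat \<Rightarrow> nat list list \<Rightarrow> bool" where
  "admissible N c \<longleftrightarrow> c \<noteq> [] \<and> (\<forall>X\<in>set c. piece N X) \<and> distinct c
     \<and> lo (hd c) = 0 \<and> hi (hd c) = N - 1 \<and> sorted_wrt may_precede c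
     \<and> pairwise compatible (set c) \<and> sides_spanned c"

lemma nest_span_cong:
  "lo X = lo X' \<Longrightarrow> hi X = hi X' \<Longrightarrow> lo Y = lo Y' \<Longrightarrow> hi Y = hi Y' \<Longrightarrow> nest X Y = nest X' Y'"
  unfolding nest_def by simp

lemma admissible_base:
  assumes "3 \<le> N" shows "admissible N [[0..<N]]"
proof -
  have w: "piece N [0..<N]" using assms unfolding piece_def by (auto simp: sorted_wrt_upt)
  have "lo [0..<N] = 0" using assms by (intro lo_eqI) auto
  moreover have "hi [0..<N] = N - 1" using assms by (intro hi_eqI) auto
  moreover have "\<not> (edge [0..<N] a b \<and> Suc a < b)" for a b
  proof
    assume h: "edge [0..<N] a b \<and> Suc a < b"
    then have "Suc a \<in> set [0..<N]" unfolding edge_def by auto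
    then show False using h unfolding edge_def by fastforce
  qed
  ultimately show ?thesis using w unfolding admissible_def sides_spanned_def by auto
qed

lemma may_precede_split:
  assumes oc: "sorted_wrt may_precede (A @ Q # B)" and wq: "piece N Q" and ch: "chord Q u v q1 q2"
    and compat: "\<And>Z. Z \<in> set B \<Longrightarrow> piece N Z \<and> compatible Z Q"
  shows "sorted_wrt may_precede (A @ q1 # q2 # B)"
proof -
  note cp = chord_props[OF wq ch]
  have ocA: "\<forall>Z\<in>set A. \<not> nest Z Q" and ocB: "\<forall>Z\<in>set B. \<not> nest Q Z"
    using oc by (auto simp: sorted_wrt_append may_precede_def)
  have q2B: "\<not> nest q2 Z" if Z: "Z \<in> set B" for Z
  proof
    assume "nest q2 Z"
    then have "lo Z \<le> u" "v \<le> hi Z" using cp(10,11) unfolding nest_def by auto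
    then have "lo Z \<le> lo Q \<and> hi Q \<le> hi Z"
      using compatible_covers_chord[OF _ wq _ ch] compat[OF Z] by blast
    moreover have "\<not> (lo Z = lo Q \<and> hi Z = hi Q)"
      using compatible_span_distinct[OF _ wq] compat[OF Z] by blast
    ultimately show False using ocB Z unfolding nest_def by auto
  qed
  have "\<not> nest Z q1" "\<not> nest Z q2" if "Z \<in> set A" for Z
    using ocA that nest_span_cong[of Z Z q1 Q] cp(3,4,8,9,10,11,16) unfolding nest_def by auto
  moreover have "\<not> nest q1 Z" if "Z \<in> set B" for Z
    using ocB that nest_span_cong[of q1 Q Z Z] cp(8,9) by auto
  moreover have "\<not> nest q1 q2" using cp(3,4,8,9,10,11,16) unfolding nest_def by auto
  ultimately show ?thesis
    using oc q2B by (auto simp: sorted_wrt_append may_precede_def)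
qed

text \<open>Splitting a piece keeps the spanning condition; the new side (u,v) of the
  outer half is spanned by the inner half.\<close>
lemma sides_spanned_split:
  assumes cov: "sides_spanned (A @ Q # B)" and wq: "piece N Q" and ch: "chord Q u v q1 q2"
  shows "sides_spanned (A @ q1 # q2 # B)"
  unfolding sides_spanned_def
proof (intro ballI allI impI)
  let ?c = "A @ Q # B" and ?c' = "A @ q1 # q2 # B"
  note cp = chord_props[OF wq ch]
  fix X a b assume X: "X \<in> set ?c'" and e: "edge X a b \<and> Suc a < b"
  have spanned: "\<exists>Z\<in>set ?c'. lo Z = a \<and> hi Z = b" if X': "X' \<in> set ?c" "edge X' a b" for X'
  proof -
    obtain W where W: "W \<in> set ?c" "lo W = a" "hi W = b"
      using cov X' e unfolding sides_spanned_def by blast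
    show ?thesis
    proof (cases "W = Q")
      case True then show ?thesis using W cp(8,9) by (intro bexI[of _ q1]) auto
    next
      case False then show ?thesis using W by (intro bexI[of _ W]) auto
    qed
  qed
  consider "X \<in> set A \<union> set B" | "X = q1" | "X = q2" using X by auto
  then show "\<exists>Z\<in>set ?c'. lo Z = a \<and> hi Z = b"
  proof cases
    case 1 then show ?thesis using spanned[of X] e by auto
  next
    case 2
    then have "(a = u \<and> b = v) \<or> edge Q a b" using chord_edges_outer[OF wq ch] e by blast
    then show ?thesis using spanned[of Q] cp(10,11) by (auto intro: bexI[of _ q2])
  next
    case 3 then show ?thesis using chord_edges_inner[OF wq ch] e spanned[of Q] by auto
  qed
qed

lemma admissible_split:
  assumes G: "admissible N (A @ Q # B)" and ch: "chord Q u v q1 q2"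
  shows "admissible N (A @ q1 # q2 # B)"
proof -
  let ?c = "A @ Q # B" and ?c' = "A @ q1 # q2 # B"
  have wf: "\<forall>X\<in>set ?c. piece N X" and dist: "distinct ?c"
    and hd0: "lo (hd ?c) = 0" "hi (hd ?c) = N - 1" and oc: "sorted_wrt may_precede ?c"
    and stc: "\<forall>X\<in>set ?c. \<forall>Y\<in>set ?c. X \<noteq> Y \<longrightarrow> compatible X Y" and cov: "sides_spanned ?c"
    using G unfolding admissible_def pairwise_def by blast+
  have wq: "piece N Q" using wf by simp
  note cp = chord_props[OF wq ch]
  have wZ: "piece N Z" and sZ: "compatible Z Q" if "Z \<in> set A \<union> set B" for Z
    using wf stc dist that by auto
  have q1_new: "Z \<noteq> q1" if Z: "Z \<in> set A \<union> set B" for Z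
    using compatible_span_distinct[OF wZ[OF Z] wq sZ[OF Z]] cp(8,9) by auto
  have q2_new: "Z \<noteq> q2" if Z: "Z \<in> set A \<union> set B" for Z
    using compatible_covers_chord[OF wZ[OF Z] wq sZ[OF Z] ch] cp(3,4,10,11,16) by auto
  have "distinct ?c'" using dist q1_new q2_new cp(8,9,10,11,16) by auto
  moreover have "lo (hd ?c') = 0 \<and> hi (hd ?c') = N - 1" using hd0 cp(8,9) by (cases A) auto
  moreover have "sorted_wrt may_precede ?c'"
    using may_precede_split[OF oc wq ch] wZ sZ by blast
  moreover have "pairwise compatible (set ?c')"
  proof -
    have "compatible Z q1" "compatible Z q2" if "Z \<in> set A \<union> set B" for Z
      using compatible_split[OF wZ[OF that] wq sZ[OF that] ch] by auto
    moreover have "compatible q1 q2"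
      using cp(10,11,14) unfolding compatible_def inside_edge_def by blast
    ultimately show ?thesis using stc compatible_sym unfolding pairwise_def by auto
  qed
  ultimately show ?thesis
    using wf cp(12,13) sides_spanned_split[OF cov wq ch] unfolding admissible_def by auto
qed

lemma nest_inside_edge:
  assumes wX: "piece N X" and wY: "piece N Y" and st: "compatible Y X" and ne: "nest Y X"
  shows "inside_edge Y X"
proof -
  have neq: "lo X \<le> lo Y" "hi Y \<le> hi X" using ne unfolding nest_def by auto
  consider "disjoint_spans Y X" | "inside_edge Y X" | "inside_edge X Y"
    using st unfolding compatible_def by blast
  then show ?thesis
  proof cases
    case 1 then show ?thesis using neq piece_basic(4)[OF wY] unfolding disjoint_spans_def by auto
  next
    case 3
    then obtain a b where e: "edge Y a b" "a \<le> lo X" "hi X \<le> b" unfolding inside_edge_def by blast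
    then show ?thesis using edge_whole[OF wY e(1)] neq by simp
  qed simp
qed

lemma compatible_no_shared_edge:
  assumes wX: "piece N X" and wZ: "piece N Z" and st: "compatible Z X"
    and eX: "edge X a b" and eZ: "edge Z a b"
  shows False
proof -
  note bX = piece_basic[OF wX] and bZ = piece_basic[OF wZ]
  have ab: "a \<in> set X" "b \<in> set X" "a \<in> set Z" "b \<in> set Z" "a < b"
    using eX eZ unfolding edge_def by auto
  consider "disjoint_spans Z X" | "inside_edge Z X" | "inside_edge X Z"
    using st unfolding compatible_def by blast
  then show False
  proof cases
    case 1 then show ?thesis using bX(3) bZ(3) ab unfolding disjoint_spans_def by (meson le_trans not_le)
  next
    case 2
    then obtain g h where gh: "edge X g h" "g \<le> lo Z" "hi Z \<le> h" unfolding inside_edge_def by blast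
    have "g \<le> a" "b \<le> h" using gh bZ(3) ab by (meson le_trans)+
    then have "g = a" "h = b" using gh(1) ab unfolding edge_def by (meson le_antisym le_trans not_le)+
    then show False using edge_whole[OF wZ eZ] gh by simp
  next
    case 3
    then obtain g h where gh: "edge Z g h" "g \<le> lo X" "hi X \<le> h" unfolding inside_edge_def by blast
    have "g \<le> a" "b \<le> h" using gh bX(3) ab by (meson le_trans)+
    then have "g = a" "h = b" using gh(1) ab unfolding edge_def by (meson le_antisym le_trans not_le)+
    then show False using edge_whole[OF wX eX] gh by simp
  qed
qed

text \<open>If Y directly follows X and is nested in it, then Y spans a side of X: otherwise
  the piece spanning that side would sit between them in the order.\<close>
lemma nested_neighbour_spans_edge:
  assumes G: "admissible N (A @ X # Y # B)" and ne: "nest Y X"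
  obtains a b where "edge X a b" "lo Y = a" "hi Y = b"
proof -
  let ?c = "A @ X # Y # B"
  have wf: "\<forall>X\<in>set ?c. piece N X" and dist: "distinct ?c" and oc: "sorted_wrt may_precede ?c"
    and stc: "\<forall>X\<in>set ?c. \<forall>Y\<in>set ?c. X \<noteq> Y \<longrightarrow> compatible X Y" and cov: "sides_spanned ?c"
    using G unfolding admissible_def pairwise_def by blast+
  have wX: "piece N X" and wY: "piece N Y" and sYX: "compatible Y X" using wf stc dist by auto
  obtain a b where eab: "edge X a b" "a \<le> lo Y" "hi Y \<le> b"
    using nest_inside_edge[OF wX wY sYX ne] unfolding inside_edge_def by blast
  have "Suc a < b"
  proof -
    obtain x where "x \<in> set Y" "lo Y < x" "x < hi Y" using piece_basic(5)[OF wY] by blast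
    then show ?thesis using eab by linarith
  qed
  then obtain Z where Z: "Z \<in> set ?c" "lo Z = a" "hi Z = b"
    using cov eab(1) unfolding sides_spanned_def by auto
  have "lo Y = a \<and> hi Y = b"
  proof (rule ccontr)
    assume nsp: "\<not> (lo Y = a \<and> hi Y = b)"
    have ZX: "Z \<noteq> X" using edge_whole[OF wX eab(1)] Z by auto
    have ZAB: "Z \<in> set A \<union> set B" using Z ZX nsp by auto
    have "nest Y Z" using eab Z nsp unfolding nest_def by auto
    moreover have "nest Z X"
      using Z eab(1) piece_basic(3)[OF wX] compatible_span_distinct[of N Z X] wf stc ZAB ZX
      unfolding nest_def edge_def by auto
    moreover have "\<forall>W\<in>set A. may_precede W X" "\<forall>W\<in>set B. may_precede Y W"
      using oc by (auto simp: sorted_wrt_append)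
    ultimately show False using ZAB unfolding may_precede_def by auto
  qed
  then show ?thesis using eab(1) that by blast
qed

text \<open>Gluing keeps the spanning condition: the chord (a,b) disappears, and it is a
  side of no other piece.\<close>
lemma sides_spanned_merge:
  assumes cov: "sides_spanned (A @ X # Y # B)" and wM: "piece N M" and ch: "chord M a b X Y"
    and others: "\<And>Z. Z \<in> set A \<union> set B \<Longrightarrow> piece N Z \<and> compatible Z X"
  shows "sides_spanned (A @ M # B)"
  unfolding sides_spanned_def
proof (intro ballI allI impI)
  let ?c = "A @ X # Y # B" and ?c' = "A @ M # B"
  note cp = chord_props[OF wM ch]
  fix U e f assume U: "U \<in> set ?c'" and ef: "edge U e f \<and> Suc e < f"
  have spanned: "\<exists>Z\<in>set ?c'. lo Z = e \<and> hi Z = f"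
    if U': "U' \<in> set ?c" "edge U' e f" and nab: "(e, f) \<noteq> (a, b)" for U'
  proof -
    obtain W where W: "W \<in> set ?c" "lo W = e" "hi W = f"
      using cov U' ef unfolding sides_spanned_def by blast
    have "W \<noteq> Y" using W cp(10,11) nab by auto
    show ?thesis
    proof (cases "W = X")
      case True then show ?thesis using W cp(8,9) by (intro bexI[of _ M]) auto
    next
      case False then show ?thesis using W \<open>W \<noteq> Y\<close> by (intro bexI[of _ W]) auto
    qed
  qed
  show "\<exists>Z\<in>set ?c'. lo Z = e \<and> hi Z = f"
  proof (cases "U = M")
    case False
    then have UAB: "U \<in> set A \<union> set B" using U by auto
    have "(e, f) \<noteq> (a, b)"
      using compatible_no_shared_edge[OF cp(12) _ _ cp(14)] others[OF UAB] ef by blast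
    then show ?thesis using spanned[of U] UAB ef by auto
  next
    case True
    then show ?thesis using chord_edges_merge[OF wM ch] ef spanned[of X] spanned[of Y] by auto
  qed
qed

lemma admissible_merge:
  assumes G: "admissible N (A @ X # Y # B)" and ne: "nest Y X"
  defines "M \<equiv> sorted_list_of_set (set X \<union> set Y)"
  shows "(X, Y) \<in> cut2 M" "admissible N (A @ M # B)"
proof -
  let ?c = "A @ X # Y # B" and ?c' = "A @ M # B"
  have wf: "\<forall>X\<in>set ?c. piece N X" and dist: "distinct ?c"
    and hd0: "lo (hd ?c) = 0" "hi (hd ?c) = N - 1" and oc: "sorted_wrt may_precede ?c"
    and stc: "\<forall>X\<in>set ?c. \<forall>Y\<in>set ?c. X \<noteq> Y \<longrightarrow> compatible X Y" and cov: "sides_spanned ?c"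
    using G unfolding admissible_def pairwise_def by blast+
  have wX: "piece N X" and wY: "piece N Y" using wf by auto
  obtain a b where eab: "edge X a b" "lo Y = a" "hi Y = b"
    using nested_neighbour_spans_edge[OF G ne] .
  have ch: "chord M a b X Y" and wM: "piece N M"
    using merge_chord[OF wX wY eab] unfolding M_def by auto
  note cp = chord_props[OF wM ch]
  show "(X, Y) \<in> cut2 M" using cut2_char[OF piece_basic(6)[OF wM]] ch by blast
  have others: "piece N Z \<and> compatible Z X \<and> compatible Z Y" if "Z \<in> set A \<union> set B" for Z
    using wf stc dist that by auto
  have "M \<noteq> Z" if Z: "Z \<in> set A \<union> set B" for Z
    using compatible_span_distinct[of N Z X] others[OF Z] wX cp(8,9) by auto
  then have "distinct ?c'" using dist by auto
  moreover have "lo (hd ?c') = 0 \<and> hi (hd ?c') = N - 1" using hd0 cp(8,9) by (cases A) auto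
  moreover have "sorted_wrt may_precede ?c'"
    using oc nest_span_cong[of _ _ M X] nest_span_cong[of M X] cp(8,9)
    unfolding may_precede_def by (auto simp: sorted_wrt_append)
  moreover have "pairwise compatible (set ?c')"
    using stc dist compatible_merge[OF _ wM ch] others compatible_sym
    unfolding pairwise_def by (auto 4 3)
  ultimately show "admissible N ?c'"
    using wf wM sides_spanned_merge[OF cov wM ch] others unfolding admissible_def by auto
qed

lemma admissible_root_nest:
  assumes G: "admissible N (X # B)" and Y: "Y \<in> set B"
  shows "nest Y X"
proof -
  have wX: "piece N X" and wY: "piece N Y" and st: "compatible Y X"
    and r: "lo X = 0" "hi X = N - 1"
    using G Y unfolding admissible_def pairwise_def by auto
  have "hi Y < N" using piece_basic(2)[OF wY] wY unfolding piece_def by auto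
  then have "hi Y \<le> hi X" using r by simp
  then show ?thesis using compatible_span_distinct[OF wY wX st] r unfolding nest_def by auto
qed

lemma admissible_swap:
  assumes G: "admissible N (A @ X # Y # B)" and nn: "\<not> nest Y X"
  shows "admissible N (A @ Y # X # B)"
proof -
  have "A \<noteq> []" using admissible_root_nest[of N X "Y # B" Y] G nn by auto
  moreover have st: "set (A @ Y # X # B) = set (A @ X # Y # B)" by auto
  moreover have "sorted_wrt may_precede (A @ Y # X # B)"
    using G nn unfolding admissible_def may_precede_def by (auto simp: sorted_wrt_append)
  moreover have "sides_spanned (A @ Y # X # B)"
    using G unfolding admissible_def sides_spanned_def st by blast
  ultimately show ?thesis using G unfolding admissible_def by (auto simp del: set_append)
qed

lemma admissible_single:
  assumes G: "admissible N [X]" shows "X = [0..<N]"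
proof -
  have wX: "piece N X" and r: "lo X = 0" "hi X = N - 1"
    and cov: "\<forall>a b. edge X a b \<and> Suc a < b \<longrightarrow> lo X = a \<and> hi X = b"
    using G unfolding admissible_def sides_spanned_def by auto
  note bX = piece_basic[OF wX]
  have consecutive: "b = Suc a" if "edge X a b" for a b
  proof (rule ccontr)
    assume "b \<noteq> Suc a"
    then have "Suc a < b" using that unfolding edge_def by auto
    then show False using cov edge_whole[OF wX that] that by auto
  qed
  have "k \<in> set X" if "k < N" for k
    using that
  proof (induction k)
    case 0 then show ?case using bX(1) r by simp
  next
    case (Suc k)
    then have kX: "k \<in> set X" by simp
    let ?T = "{x\<in>set X. k < x}"
    have "hi X \<in> ?T" using bX(2) r Suc.prems by auto
    then have Tne: "?T \<noteq> {}" and Tfin: "finite ?T" by auto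
    define f where "f = Min ?T"
    have fT: "f \<in> ?T" unfolding f_def using Min_in[OF Tfin Tne] .
    have "\<forall>x\<in>?T. f \<le> x" unfolding f_def using Tfin by auto
    then have "edge X k f" unfolding edge_def using kX fT by force
    then have "f = Suc k" by (rule consecutive)
    then show ?case using fT by simp
  qed
  then have "set X = {0..<N}" using wX unfolding piece_def by auto
  then show ?thesis using strict_sorted_equal[OF bX(6), of "[0..<N]"] by (simp add: sorted_wrt_upt)
qed

lemma cuts_admissible:
  assumes N: "3 \<le> N" and c: "c \<in> cuts [0..<N]"
  shows "admissible N c"
  using c
proof (induction c rule: cuts.induct)
  case base then show ?case using admissible_base[OF N] .
next
  case (step cs l q1 q2)
  have e: "cs = take l cs @ cs ! l # drop (Suc l) cs"
    using step.hyps(2) by (simp add: id_take_nth_drop)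
  have "piece N (cs ! l)" using step.IH step.hyps(2) unfolding admissible_def by auto
  then obtain u v where ch: "chord (cs ! l) u v q1 q2"
    using cut2_char[of "cs ! l" q1 q2] step.hyps(3) unfolding piece_def by blast
  have "admissible N (take l cs @ cs ! l # drop (Suc l) cs)" using step.IH e by simp
  from admissible_split[OF this ch] show ?case by simp
qed

text \<open>Conversely, an admissible list is built by splitting: glue its first two pieces.\<close>
lemma admissible_cuts:
  "admissible N c \<Longrightarrow> c \<in> cuts [0..<N]"
proof (induction "length c" arbitrary: c rule: less_induct)
  case less
  obtain X B where c: "c = X # B" using less.prems unfolding admissible_def by (cases c) auto
  show ?case
  proof (cases B)
    case Nil
    then show ?thesis using admissible_single less.prems c cuts.base by simp
  next
    case (Cons Y B')
    have G: "admissible N ([] @ X # Y # B')" using less.prems c Cons by simp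
    then have "nest Y X" using admissible_root_nest[of N X "Y # B'" Y] by simp
    from admissible_merge[OF G this]
    have cM: "(X, Y) \<in> cut2 (sorted_list_of_set (set X \<union> set Y))"
      and GM: "admissible N (sorted_list_of_set (set X \<union> set Y) # B')" by auto
    have "sorted_list_of_set (set X \<union> set Y) # B' \<in> cuts [0..<N]"
      using less.hyps[OF _ GM] c Cons by simp
    from cuts.step[OF this, of 0 X Y] cM show ?thesis using c Cons by simp
  qed
qed

section \<open>The combinatorial cancellation\<close>

definition split_at :: "nat list list \<Rightarrow> nat \<Rightarrow> nat list \<Rightarrow> nat list \<Rightarrow> nat list list" where
  "split_at c i q1 q2 = take i c @ [q1, q2] @ drop (Suc i) c"
definition swap_at :: "nat list list \<Rightarrow> nat \<Rightarrow> nat list list" where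
  "swap_at c i = take i c @ [c ! Suc i, c ! i] @ drop (Suc (Suc i)) c"

lemma decompose_adjacent: "Suc i < length c \<Longrightarrow> c = take i c @ c ! i # c ! Suc i # drop (Suc (Suc i)) c"
  by (metis Cons_nth_drop_Suc Suc_lessD append_take_drop_id)

lemma split_at_facts:
  assumes "i < length c"
  shows "length (split_at c i q1 q2) = Suc (length c)" "split_at c i q1 q2 ! i = q1" "split_at c i q1 q2 ! Suc i = q2"
    "take i (split_at c i q1 q2) = take i c" "drop (Suc (Suc i)) (split_at c i q1 q2) = drop (Suc i) c"
  using assms unfolding split_at_def by (auto simp: nth_append min_def)

lemma swap_at_facts:
  assumes "Suc i < length c"
  shows "length (swap_at c i) = length c" "swap_at c i ! i = c ! Suc i" "swap_at c i ! Suc i = c ! i"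
    "take i (swap_at c i) = take i c" "drop (Suc (Suc i)) (swap_at c i) = drop (Suc (Suc i)) c"
    "swap_at (swap_at c i) i = c"
  using assms unfolding swap_at_def
  by (auto simp: nth_append min_def) (metis decompose_adjacent[OF assms] append.assoc append_Cons append_Nil)

text \<open>There are finitely many cuts: admissible lists are distinct lists of pieces.\<close>
lemma finite_cuts: "finite (cuts [0..<N])"
proof (cases "3 \<le> N")
  case True
  let ?P = "sorted_list_of_set ` Pow {..<N}"
  have fP: "finite ?P" by simp
  have "cuts [0..<N] \<subseteq> {xs. set xs \<subseteq> ?P \<and> length xs \<le> card ?P}"
  proof
    fix c assume "c \<in> cuts [0..<N]"
    then have G: "admissible N c" using cuts_admissible[OF True] by blast
    have sub: "set c \<subseteq> ?P"
    proof
      fix X assume "X \<in> set c"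
      then have w: "piece N X" using G unfolding admissible_def by auto
      then have "X = sorted_list_of_set (set X)" unfolding piece_def
        by (metis sorted_list_of_set.idem_if_sorted_distinct strict_sorted_iff subset_UNIV)
      moreover have "set X \<in> Pow {..<N}" using w unfolding piece_def by auto
      ultimately show "X \<in> ?P" by blast
    qed
    have "distinct c" using G unfolding admissible_def by auto
    then have "length c = card (set c)" by (simp add: distinct_card)
    also have "\<dots> \<le> card ?P" using sub fP by (rule card_mono[rotated])
    finally show "c \<in> {xs. set xs \<subseteq> ?P \<and> length xs \<le> card ?P}" using sub by auto
  qed
  then show ?thesis using finite_lists_length_le[OF fP] finite_subset by blast
next
  case False
  have "cuts [0..<N] \<subseteq> {[[0..<N]]}"
  proof
    fix c assume "c \<in> cuts [0..<N]"
    then show "c \<in> {[[0..<N]]}"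
    proof (induction rule: cuts.induct)
      case (step cs l q1 q2)
      then have "cut2 (cs ! l) = {}" using False unfolding cut2_def by auto
      then show ?case using step by simp
    qed simp
  qed
  then show ?thesis by (rule finite_subset) simp
qed

lemma finite_cut2: "finite (cut2 P)"
proof -
  have "cut2 P \<subseteq> (\<lambda>(i, j). (take (i+1) P @ drop (j+1) P, take (j+2-i) (drop i P))) ` ({..<length P} \<times> {..<length P})"
    unfolding cut2_def by (auto simp: image_iff)
  then show ?thesis by (rule finite_subset) simp
qed

lemma cut2_unique:
  assumes "piece N P" "piece N P'" "(q1, q2) \<in> cut2 P" "(q1, q2) \<in> cut2 P'"
  shows "P = P'"
proof -
  obtain u v where c1: "chord P u v q1 q2" using assms(1,3) cut2_char[of P] unfolding piece_def by blast
  obtain u' v' where c2: "chord P' u' v' q1 q2" using assms(2,4) cut2_char[of P'] unfolding piece_def by blast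
  have "set q1 \<union> set q2 = set P" using chord_props(15)[OF assms(1) c1] .
  moreover have "set q1 \<union> set q2 = set P'" using chord_props(15)[OF assms(2) c2] .
  ultimately show ?thesis using strict_sorted_equal[of P P'] assms(1,2) unfolding piece_def by auto
qed

text \<open>Triples (c, i, q): a cut, a slot, and a 2-cut of the piece in that slot; these
  index the external differential of T(A).  Pairs (c, i) of a cut and two adjacent
  slots index the internal differential.\<close>
definition split_data :: "nat \<Rightarrow> (nat list list \<times> nat \<times> nat list \<times> nat list) set" where
  "split_data N = {(c, i, q). c \<in> cuts [0..<N] \<and> i < length c \<and> q \<in> cut2 (c ! i)}"
definition adjacent_slots :: "nat \<Rightarrow> (nat list list \<times> nat) set" where
  "adjacent_slots N = {(c, i). c \<in> cuts [0..<N] \<and> Suc i < length c}"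
definition nested_slots :: "nat \<Rightarrow> (nat list list \<times> nat) set" where
  "nested_slots N = {(c, i) \<in> adjacent_slots N. nest (c ! Suc i) (c ! i)}"

definition split_map :: "nat list list \<times> nat \<times> nat list \<times> nat list \<Rightarrow> nat list list \<times> nat" where
  "split_map = (\<lambda>(c, i, q). (split_at c i (fst q) (snd q), i))"

lemma split_map_inj:
  assumes N: "3 \<le> N" shows "inj_on split_map (split_data N)"
proof (rule inj_onI)
  fix x y assume x: "x \<in> split_data N" and y: "y \<in> split_data N" and e: "split_map x = split_map y"
  obtain c i q1 q2 where xx: "x = (c, i, (q1, q2))" by (metis prod.exhaust)
  obtain c' i' q1' q2' where yy: "y = (c', i', (q1', q2'))" by (metis prod.exhaust)
  have xc: "c \<in> cuts [0..<N]" "i < length c" "(q1, q2) \<in> cut2 (c ! i)"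
    using x xx unfolding split_data_def by auto
  have yc: "c' \<in> cuts [0..<N]" "i' < length c'" "(q1', q2') \<in> cut2 (c' ! i')"
    using y yy unfolding split_data_def by auto
  have ii: "i' = i" and se: "split_at c i q1 q2 = split_at c' i q1' q2'"
    using e xx yy unfolding split_map_def by auto
  note f1 = split_at_facts[OF xc(2), of q1 q2] and f2 = split_at_facts[OF yc(2)[unfolded ii], of q1' q2']
  have qq: "q1' = q1" "q2' = q2" using f1 f2 se by metis+
  have tk: "take i c = take i c'" and dr: "drop (Suc i) c = drop (Suc i) c'"
    using f1(4,5) f2(4,5) se by metis+
  have "piece N (c ! i)" "piece N (c' ! i)"
    using cuts_admissible[OF N xc(1)] cuts_admissible[OF N yc(1)] xc(2) yc(2) ii
    unfolding admissible_def by auto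
  then have ci: "c ! i = c' ! i" using cut2_unique xc(3) yc(3) qq ii by metis
  have "c = take i c @ c ! i # drop (Suc i) c" using xc(2) by (simp add: id_take_nth_drop)
  also have "\<dots> = c'" using tk dr ci yc(2) ii by (simp add: id_take_nth_drop[symmetric])
  finally show "x = y" using xx yy ii qq by simp
qed

lemma split_map_image:
  assumes N: "3 \<le> N" shows "split_map ` split_data N = nested_slots N"
proof
  show "split_map ` split_data N \<subseteq> nested_slots N"
  proof
    fix y assume "y \<in> split_map ` split_data N"
    then obtain c i q1 q2 where x: "(c, i, (q1, q2)) \<in> split_data N"
      and y: "y = (split_at c i q1 q2, i)"
      unfolding split_map_def by auto
    have xc: "c \<in> cuts [0..<N]" "i < length c" "(q1, q2) \<in> cut2 (c ! i)"
      using x unfolding split_data_def by auto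
    have sC: "split_at c i q1 q2 \<in> cuts [0..<N]"
      using cuts.step[OF xc] unfolding split_at_def .
    have w: "piece N (c ! i)" using cuts_admissible[OF N xc(1)] xc(2) unfolding admissible_def by auto
    then obtain u v where ch: "chord (c ! i) u v q1 q2"
      using xc(3) cut2_char[of "c ! i"] unfolding piece_def by blast
    note cp = chord_props[OF w ch]
    have "nest q2 q1" unfolding nest_def using cp(3,4,8,9,10,11,16) by auto
    then show "y \<in> nested_slots N"
      unfolding nested_slots_def adjacent_slots_def using y sC split_at_facts[OF xc(2)] xc(2) by auto
  qed
  show "nested_slots N \<subseteq> split_map ` split_data N"
  proof
    fix y assume y: "y \<in> nested_slots N"
    then obtain c i where yy: "y = (c, i)" by (metis prod.exhaust)
    have yc: "c \<in> cuts [0..<N]" "Suc i < length c" "nest (c ! Suc i) (c ! i)"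
      using y yy unfolding nested_slots_def adjacent_slots_def by auto
    have G: "admissible N (take i c @ c ! i # c ! Suc i # drop (Suc (Suc i)) c)"
      using cuts_admissible[OF N yc(1)] decompose_adjacent[OF yc(2)] by simp
    define M where "M = sorted_list_of_set (set (c ! i) \<union> set (c ! Suc i))"
    let ?c0 = "take i c @ M # drop (Suc (Suc i)) c"
    have "(c ! i, c ! Suc i) \<in> cut2 M" "admissible N ?c0"
      using admissible_merge[OF G yc(3)] unfolding M_def by auto
    moreover have "?c0 ! i = M" "i < length ?c0" using yc(2) by (simp_all add: nth_append min_def)
    ultimately have "(?c0, i, (c ! i, c ! Suc i)) \<in> split_data N"
      unfolding split_data_def using admissible_cuts by auto
    moreover have "split_at ?c0 i (c ! i) (c ! Suc i) = c"
      unfolding split_at_def using decompose_adjacent[OF yc(2)] yc(2) by (simp add: min_def)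
    ultimately show "y \<in> split_map ` split_data N"
      unfolding split_map_def yy by force
  qed
qed

lemma swap_unnested:
  assumes N: "3 \<le> N" and x: "(c, i) \<in> adjacent_slots N - nested_slots N"
  shows "(swap_at c i, i) \<in> adjacent_slots N - nested_slots N"
proof -
  have xc: "c \<in> cuts [0..<N]" "Suc i < length c" "\<not> nest (c ! Suc i) (c ! i)"
    using x unfolding nested_slots_def adjacent_slots_def by auto
  note sf = swap_at_facts[OF xc(2)]
  have G: "admissible N (take i c @ c ! i # c ! Suc i # drop (Suc (Suc i)) c)"
    using cuts_admissible[OF N xc(1)] decompose_adjacent[OF xc(2)] by simp
  have "admissible N (take i c @ c ! Suc i # c ! i # drop (Suc (Suc i)) c)"
    using admissible_swap[OF G xc(3)] .
  then have sC: "swap_at c i \<in> cuts [0..<N]" using admissible_cuts unfolding swap_at_def by simp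
  have "sorted_wrt may_precede c" using cuts_admissible[OF N xc(1)] unfolding admissible_def by auto
  then have "may_precede (c ! i) (c ! Suc i)" using xc(2) by (simp add: sorted_wrt_nth_less)
  then have "\<not> nest (c ! i) (c ! Suc i)" unfolding may_precede_def .
  then show ?thesis
    unfolding nested_slots_def adjacent_slots_def using sC sf xc(2) by auto
qed

lemma unnested_slots_cancel:
  fixes h :: "nat list list \<Rightarrow> nat \<Rightarrow> rat"
  assumes N: "3 \<le> N"
    and anti: "\<And>c i. Suc i < length c \<Longrightarrow> h (swap_at c i) i = - h c i"
  shows "(\<Sum>(c, i)\<in>adjacent_slots N - nested_slots N. h c i) = 0"
proof -
  let ?D = "adjacent_slots N - nested_slots N" and ?sw = "\<lambda>(c, i). (swap_at c i, i)"
    and ?h = "\<lambda>(c, i). h c i"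
  have sw: "?sw x \<in> ?D \<and> ?sw (?sw x) = x \<and> ?h (?sw x) = - ?h x" if x: "x \<in> ?D" for x
  proof -
    obtain c i where xx: "x = (c, i)" by (cases x)
    have "Suc i < length c" using x xx unfolding adjacent_slots_def by auto
    then show ?thesis using swap_unnested[OF N] anti x xx swap_at_facts(6) by auto
  qed
  have "(\<Sum>x\<in>?D. ?h x) = (\<Sum>x\<in>?D. ?h (?sw x))"
    by (rule sum.reindex_bij_witness[of _ ?sw ?sw]) (use sw in auto)
  also have "\<dots> = - (\<Sum>x\<in>?D. ?h x)" using sw by (simp add: sum_negf)
  finally show ?thesis by simp
qed

lemma cut_cancellation:
  fixes h :: "nat list list \<Rightarrow> nat \<Rightarrow> rat"
  assumes N: "3 \<le> N"
    and anti: "\<And>c i. Suc i < length c \<Longrightarrow> h (swap_at c i) i = - h c i"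
  shows "(\<Sum>c\<in>cuts [0..<N]. \<Sum>i<length c. \<Sum>q\<in>cut2 (c ! i). h (split_at c i (fst q) (snd q)) i)
       = (\<Sum>c\<in>cuts [0..<N]. \<Sum>i<length c - 1. h c i)"
proof -
  let ?C = "cuts [0..<N]" and ?h = "\<lambda>(c, i). h c i"
  have fC: "finite ?C" by (rule finite_cuts)
  have E: "split_data N = Sigma ?C (\<lambda>c. Sigma {..<length c} (\<lambda>i. cut2 (c ! i)))"
    unfolding split_data_def by auto
  have I: "adjacent_slots N = Sigma ?C (\<lambda>c. {..<length c - 1})"
    unfolding adjacent_slots_def by auto
  have fI: "finite (adjacent_slots N)" unfolding I using fC by auto
  have "(\<Sum>c\<in>?C. \<Sum>i<length c. \<Sum>q\<in>cut2 (c ! i). h (split_at c i (fst q) (snd q)) i)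
      = (\<Sum>x\<in>split_data N. ?h (split_map x))"
    unfolding E split_map_def using fC by (simp add: sum.Sigma finite_cut2 split_def)
  also have "\<dots> = (\<Sum>x\<in>nested_slots N. ?h x)"
    using sum.reindex[OF split_map_inj[OF N], of ?h] split_map_image[OF N] by simp
  also have "\<dots> = (\<Sum>x\<in>adjacent_slots N. ?h x)"
  proof -
    have "nested_slots N \<subseteq> adjacent_slots N" unfolding nested_slots_def by auto
    then show ?thesis
      using sum.subset_diff[OF _ fI, of "nested_slots N" ?h] unnested_slots_cancel[of N h, OF N anti]
      by simp
  qed
  also have "\<dots> = (\<Sum>c\<in>?C. \<Sum>i<length c - 1. h c i)"
    unfolding I using fC by (simp add: sum.Sigma split_def)
  finally show ?thesis .
qed

section \<open>Evaluating linear functionals on formal sums\<close>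

definition fin_supp :: "('a \<Rightarrow> rat) \<Rightarrow> bool" where "fin_supp F \<longleftrightarrow> finite {b. F b \<noteq> 0}"
definition evalf :: "('a \<Rightarrow> rat) \<Rightarrow> ('a \<Rightarrow> rat) \<Rightarrow> rat" where
  "evalf s F = (\<Sum>b\<in>{b. F b \<noteq> 0}. F b * s b)"

lemma evalf_eq: "fin_supp F \<Longrightarrow> finite U \<Longrightarrow> {b. F b \<noteq> 0} \<subseteq> U \<Longrightarrow> evalf s F = (\<Sum>b\<in>U. F b * s b)"
  unfolding evalf_def fin_supp_def by (rule sum.mono_neutral_left) auto

lemma fin_supp_zero[simp]: "fin_supp 0" unfolding fin_supp_def by simp
lemma evalf_zero[simp]: "evalf s 0 = 0" unfolding evalf_def by simp

lemma fin_supp_add[simp]: "fin_supp F \<Longrightarrow> fin_supp G \<Longrightarrow> fin_supp (F + G)"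
  unfolding fin_supp_def by (rule finite_subset[of _ "{b. F b \<noteq> 0} \<union> {b. G b \<noteq> 0}"]) auto

lemma evalf_add: "fin_supp F \<Longrightarrow> fin_supp G \<Longrightarrow> evalf s (F + G) = evalf s F + evalf s G"
proof -
  assume f: "fin_supp F" "fin_supp G"
  let ?U = "{b. F b \<noteq> 0} \<union> {b. G b \<noteq> 0}"
  have fU: "finite ?U" using f unfolding fin_supp_def by auto
  have "evalf s (F + G) = (\<Sum>b\<in>?U. (F + G) b * s b)" using f fU by (intro evalf_eq) auto
  also have "\<dots> = (\<Sum>b\<in>?U. F b * s b) + (\<Sum>b\<in>?U. G b * s b)"
    by (simp add: distrib_right sum.distrib)
  also have "\<dots> = evalf s F + evalf s G"
  proof -
    have "evalf s F = (\<Sum>b\<in>?U. F b * s b)" by (rule evalf_eq) (use f fU in auto)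
    moreover have "evalf s G = (\<Sum>b\<in>?U. G b * s b)" by (rule evalf_eq) (use f fU in auto)
    ultimately show ?thesis by simp
  qed
  finally show ?thesis .
qed

lemma fin_supp_smult[simp]: "fin_supp F \<Longrightarrow> fin_supp (smult c F)"
  unfolding fin_supp_def smult_def by (rule finite_subset[of _ "{b. F b \<noteq> 0}"]) auto

lemma evalf_smult: "fin_supp F \<Longrightarrow> evalf s (smult c F) = c * evalf s F"
proof -
  assume f: "fin_supp F"
  have "evalf s (smult c F) = (\<Sum>b\<in>{b. F b \<noteq> 0}. smult c F b * s b)"
    using f by (intro evalf_eq) (auto simp: fin_supp_def smult_def)
  also have "\<dots> = c * evalf s F" unfolding evalf_def smult_def by (simp add: sum_distrib_left mult.assoc)
  finally show ?thesis .
qed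

lemma fin_supp_single[simp]: "fin_supp (single b)" unfolding fin_supp_def single_def by simp

lemma evalf_single[simp]: "evalf s (single b) = s b"
  unfolding evalf_def single_def by (simp add: if_distrib)

lemma fin_supp_sum: "(\<And>x. x \<in> S \<Longrightarrow> fin_supp (F x)) \<Longrightarrow> fin_supp (\<Sum>x\<in>S. F x)"
  by (induction S rule: infinite_finite_induct) auto

lemma evalf_sum: "(\<And>x. x \<in> S \<Longrightarrow> fin_supp (F x)) \<Longrightarrow> evalf s (\<Sum>x\<in>S. F x) = (\<Sum>x\<in>S. evalf s (F x))"
proof (induction S rule: infinite_finite_induct)
  case (insert x S)
  have e: "(\<Sum>y\<in>insert x S. F y) = F x + (\<Sum>y\<in>S. F y)" using insert(1,2) by (rule sum.insert)
  have "fin_supp (\<Sum>y\<in>S. F y)" using insert(4) by (intro fin_supp_sum) auto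
  then have A: "evalf s (\<Sum>y\<in>insert x S. F y) = evalf s (F x) + evalf s (\<Sum>y\<in>S. F y)"
    unfolding e using insert(4) by (intro evalf_add) auto
  have B: "evalf s (\<Sum>y\<in>S. F y) = (\<Sum>y\<in>S. evalf s (F y))" using insert by auto
  have C: "(\<Sum>y\<in>insert x S. evalf s (F y)) = evalf s (F x) + (\<Sum>y\<in>S. evalf s (F y))"
    using insert(1,2) by (rule sum.insert)
  show ?case using A B C by linarith
qed auto

lemma fin_supp_dbasis: "fin_supp (dbasis ws)"
  unfolding dbasis_def dext_def dint_def split_def
  by (intro fin_supp_add fin_supp_sum fin_supp_smult fin_supp_single)

lemma evalf_dext: "evalf s (dext ws) = (\<Sum>i<length ws. \<Sum>j<length (ws ! i).
      \<Sum>x\<in>cut2 [0..<length (ws ! i ! j)].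
        (jsign ws i * (-1) * (-1) ^ j) *
          s (ws[i := take j (ws ! i)
                    @ [map (\<lambda>k. ws ! i ! j ! k) (fst x), map (\<lambda>k. ws ! i ! j ! k) (snd x)]
                    @ drop (Suc j) (ws ! i)]))"
  unfolding dext_def split_def
  by (simp add: evalf_sum fin_supp_sum evalf_smult)

lemma evalf_dint: "evalf s (dint ws) = (\<Sum>i<length ws - 1.
      jsign ws (Suc i) * s (take i ws @ [ws ! i @ ws ! Suc i] @ drop (Suc (Suc i)) ws))"
  unfolding dint_def by (simp add: evalf_sum evalf_smult)

lemma evalf_dbasis: "evalf s (dbasis ws) = evalf s (dext ws) + evalf s (dint ws)"
  unfolding dbasis_def
  by (rule evalf_add) (auto simp: dext_def dint_def split_def intro!: fin_supp_sum)

lemma evalf_dB: "evalf s (dB F) = evalf (\<lambda>b. evalf s (dbasis b)) F"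
proof -
  have "evalf s (dB F) = (\<Sum>b\<in>{b. F b \<noteq> 0}. evalf s (smult (F b) (dbasis b)))"
    unfolding dB_def by (rule evalf_sum) (simp add: fin_supp_dbasis)
  also have "\<dots> = (\<Sum>b\<in>{b. F b \<noteq> 0}. F b * evalf s (dbasis b))"
    by (simp add: evalf_smult fin_supp_dbasis)
  also have "\<dots> = evalf (\<lambda>b. evalf s (dbasis b)) F" unfolding evalf_def ..
  finally show ?thesis .
qed

lemma bar_zero_iff: "bar_zero F \<longleftrightarrow> (\<forall>w. evalf (\<lambda>b. slotsign b w) F = 0)"
  unfolding bar_zero_def evalf_def ..

section \<open>Signs in the exterior algebra\<close>

lemma pairs_below_two:
  "{(k, l). k < l \<and> l < Suc (Suc 0) \<and> P k l} = (if P 0 (Suc 0) then {(0, Suc 0)} else {})"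
  by (auto simp: less_Suc_eq)

lemma ex_pair_below_two: "(\<exists>a b. b < a \<and> a < Suc (Suc 0) \<and> Q a b) \<longleftrightarrow> Q (Suc 0) 0"
  by (auto simp: less_Suc_eq)

lemma distinct_doubleton:
  assumes "distinct v" "set v = {x, y}" "x \<noteq> y"
  shows "v = [x, y] \<or> v = [y, x]"
proof -
  have "length v = 2" using assms distinct_card[OF assms(1)] by simp
  then obtain p q where "v = [p, q]" by (auto simp: length_Suc_conv numeral_2_eq_2)
  then show ?thesis using assms by (auto simp: doubleton_eq_iff)
qed

lemma permsign_pair_same: "x \<noteq> y \<Longrightarrow> permsign [x, y] [x, y] = 1"
  unfolding permsign_def by (simp add: pairs_below_two ex_pair_below_two)

lemma permsign_pair_reversed: "x \<noteq> y \<Longrightarrow> permsign [x, y] [y, x] = -1"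
  unfolding permsign_def by (simp add: pairs_below_two ex_pair_below_two insert_commute)

lemma permsign_pair_swap: "permsign [x, y] v = - permsign [y, x] v"
proof (cases "x \<noteq> y \<and> distinct v \<and> set v = {x, y}")
  case False
  have "\<not> (distinct [x, y] \<and> distinct v \<and> set [x, y] = set v)" using False by auto
  then have "permsign [x, y] v = 0" unfolding permsign_def by (rule if_not_P)
  moreover have "\<not> (distinct [y, x] \<and> distinct v \<and> set [y, x] = set v)"
  proof
    assume "distinct [y, x] \<and> distinct v \<and> set [y, x] = set v"
    moreover have "{y, x} = {x, y}" by blast
    ultimately show False using False by simp
  qed
  then have "permsign [y, x] v = 0" unfolding permsign_def by (rule if_not_P)
  ultimately show ?thesis by simp
next
  case True
  then have xy: "x \<noteq> y" "y \<noteq> x" by auto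
  consider "v = [x, y]" | "v = [y, x]" using distinct_doubleton[of v x y] True by blast
  then show ?thesis
  proof cases
    case 1 then show ?thesis using permsign_pair_same[OF xy(1)] permsign_pair_reversed[OF xy(2)] by simp
  next
    case 2 then show ?thesis using permsign_pair_reversed[OF xy(1)] permsign_pair_same[OF xy(2)] by simp
  qed
qed

lemma prod_negate_one_factor:
  fixes f g :: "nat \<Rightarrow> rat"
  assumes "k < n" "g k = - f k" "\<And>i. i < n \<Longrightarrow> i \<noteq> k \<Longrightarrow> g i = f i"
  shows "(\<Prod>i<n. g i) = - (\<Prod>i<n. f i)"
proof -
  have "(\<Prod>i\<in>{..<n} - {k}. g i) = (\<Prod>i\<in>{..<n} - {k}. f i)" using assms(3) by (intro prod.cong) auto
  then show ?thesis using assms(1,2) by (simp add: prod.remove)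
qed

lemma slotsign_swap: "slotsign (xs @ [x, y] # ys) w = - slotsign (xs @ [y, x] # ys) w"
proof (cases "length (xs @ [x, y] # ys) = length w")
  case False then show ?thesis unfolding slotsign_def by simp
next
  case True
  have "(\<Prod>i<length w. permsign ((xs @ [x, y] # ys) ! i) (w ! i))
      = - (\<Prod>i<length w. permsign ((xs @ [y, x] # ys) ! i) (w ! i))"
    by (rule prod_negate_one_factor[of "length xs"])
      (use True permsign_pair_swap in \<open>auto simp: nth_append\<close>)
  then show ?thesis unfolding slotsign_def using True by simp
qed

section \<open>Pairing d T(A) with a functional\<close>

lemma cut2_as_image:
  "cut2 Q = (\<lambda>(i, j). (take (i+1) Q @ drop (j+1) Q, take (j+2-i) (drop i Q)))
     ` {(i, j). i < j \<and> j \<le> length Q - 2 \<and> (i, j) \<noteq> (0, length Q - 2)}"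
  unfolding cut2_def by (auto simp: image_def)

lemma cut2_map: "cut2 (map f P) = (\<lambda>x. (map f (fst x), map f (snd x))) ` cut2 P"
  unfolding cut2_as_image[of "map f P"] cut2_as_image[of P]
  by (simp add: image_image take_map drop_map split_def)

lemma cut2_sub: "x \<in> cut2 P \<Longrightarrow> set (fst x) \<subseteq> set P \<and> set (snd x) \<subseteq> set P"
proof -
  assume "x \<in> cut2 P"
  then obtain i j where "x = (take (i+1) P @ drop (j+1) P, take (j+2-i) (drop i P))"
    unfolding cut2_def by blast
  moreover have "set (take n (drop i P)) \<subseteq> set P" for n i
    by (meson order.trans set_drop_subset set_take_subset)
  moreover have "set (take n P @ drop m P) \<subseteq> set P" for n m
    using set_drop_subset set_take_subset by force
  ultimately show ?thesis by simp
qed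

lemma cut2_positions:
  assumes "distinct q"
  shows "bij_betw (\<lambda>x. (map ((!) q) (fst x), map ((!) q) (snd x))) (cut2 [0..<length q]) (cut2 q)"
proof (rule bij_betw_imageI)
  have ij: "inj_on ((!) q) {..<length q}" using assms by (intro inj_on_nth) auto
  show "inj_on (\<lambda>x. (map ((!) q) (fst x), map ((!) q) (snd x))) (cut2 [0..<length q])"
  proof (rule inj_onI)
    fix x y assume x: "x \<in> cut2 [0..<length q]" and y: "y \<in> cut2 [0..<length q]"
      and e: "(map ((!) q) (fst x), map ((!) q) (snd x)) = (map ((!) q) (fst y), map ((!) q) (snd y))"
    have "set (fst x) \<union> set (fst y) \<subseteq> {..<length q}" "set (snd x) \<union> set (snd y) \<subseteq> {..<length q}"
      using cut2_sub[OF x] cut2_sub[OF y] by auto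
    then have "fst x = fst y" "snd x = snd y"
      using e inj_on_map_eq_map[OF inj_on_subset[OF ij]] by auto
    then show "x = y" by (simp add: prod_eq_iff)
  qed
  show "(\<lambda>x. (map ((!) q) (fst x), map ((!) q) (snd x))) ` cut2 [0..<length q] = cut2 q"
    using cut2_map[of "(!) q" "[0..<length q]"] by (simp add: map_nth)
qed

definition syms :: "'s list \<Rightarrow> nat list \<Rightarrow> 's list" where
  "syms A q = map ((!) A) q"
definition bar_of :: "'s list \<Rightarrow> nat list list \<Rightarrow> 's barb" where
  "bar_of A c = map (\<lambda>q. [syms A q]) c"

lemma length_bar_of[simp]: "length (bar_of A c) = length c"
  unfolding bar_of_def by simp

lemma Tcut_as_sum: "Tcut A = (\<Sum>c\<in>cuts [0..<length A]. single (bar_of A c))"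
  unfolding Tcut_def bar_of_def syms_def by simp

definition merge_sign :: "'s list \<Rightarrow> 's barb \<Rightarrow> nat list list \<Rightarrow> nat \<Rightarrow> rat" where
  "merge_sign A w c i = slotsign (bar_of A (take i c)
     @ [syms A (c ! i), syms A (c ! Suc i)] # bar_of A (drop (Suc (Suc i)) c)) w"

lemma merge_sign_swap: "Suc i < length c \<Longrightarrow> merge_sign A w (swap_at c i) i = - merge_sign A w c i"
  unfolding merge_sign_def using swap_at_facts[of i c]
  by (simp add: slotsign_swap[of _ "syms A (c ! Suc i)"])

text \<open>All slots of bar_of A c are single generators (degree 1), so no signs J occur.\<close>
lemma jsign_bar_of: "i \<le> length c \<Longrightarrow> jsign (bar_of A c) i = 1"
  unfolding jsign_def bar_of_def by (intro prod.neutral) auto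

lemma evalf_dint_bar_of:
  "evalf (\<lambda>b. slotsign b w) (dint (bar_of A c)) = (\<Sum>i<length c - 1. merge_sign A w c i)"
  unfolding evalf_dint
proof (rule sum.cong)
  fix i assume "i \<in> {..<length c - 1}"
  then have i: "Suc i < length c" by auto
  have "take i (bar_of A c) @ [bar_of A c ! i @ bar_of A c ! Suc i] @ drop (Suc (Suc i)) (bar_of A c)
      = bar_of A (take i c) @ [syms A (c ! i), syms A (c ! Suc i)] # bar_of A (drop (Suc (Suc i)) c)"
    unfolding bar_of_def using i by (simp add: take_map drop_map)
  then show "jsign (bar_of A c) (Suc i) * slotsign (take i (bar_of A c) @ [bar_of A c ! i @ bar_of A c ! Suc i]
      @ drop (Suc (Suc i)) (bar_of A c)) w = merge_sign A w c i"
    unfolding merge_sign_def using jsign_bar_of[of "Suc i" c A] i by simp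
qed (simp add: bar_of_def)

lemma evalf_dext_bar_of:
  assumes dist: "\<And>q. q \<in> set c \<Longrightarrow> distinct q"
  shows "evalf (\<lambda>b. slotsign b w) (dext (bar_of A c))
     = - (\<Sum>i<length c. \<Sum>q\<in>cut2 (c ! i). merge_sign A w (split_at c i (fst q) (snd q)) i)"
proof -
  let ?s = "\<lambda>b. slotsign b w" and ?pm = "\<lambda>i x. (map ((!) (c ! i)) (fst x), map ((!) (c ! i)) (snd x))"
  have slot_term: "(jsign (bar_of A c) i * (-1) * (-1) ^ j) * ?s ((bar_of A c)[i := take j (bar_of A c ! i)
        @ [map (\<lambda>k. bar_of A c ! i ! j ! k) (fst x), map (\<lambda>k. bar_of A c ! i ! j ! k) (snd x)]
        @ drop (Suc j) (bar_of A c ! i)])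
      = - merge_sign A w (split_at c i (fst (?pm i x)) (snd (?pm i x))) i"
    if i: "i \<in> {..<length c}" and j: "j \<in> {..<length (bar_of A c ! i)}"
      and x: "x \<in> cut2 [0..<length (bar_of A c ! i ! j)]" for i j x
  proof -
    have i: "i < length c" and j0: "j = 0" and slot: "bar_of A c ! i = [syms A (c ! i)]"
      using i j unfolding bar_of_def by auto
    have "set (fst x) \<subseteq> {..<length (c ! i)}" "set (snd x) \<subseteq> {..<length (c ! i)}"
      using cut2_sub[OF x] slot j0 by (auto simp: syms_def)
    then have "map ((!) (syms A (c ! i))) (fst x) = syms A (fst (?pm i x))"
      "map ((!) (syms A (c ! i))) (snd x) = syms A (snd (?pm i x))"
      unfolding syms_def by auto
    then show ?thesis
      using i jsign_bar_of[of i c A] split_at_facts[OF i, of "fst (?pm i x)" "snd (?pm i x)"]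
      unfolding merge_sign_def slot j0
      by (simp add: upd_conv_take_nth_drop take_map drop_map bar_of_def)
  qed
  have "evalf ?s (dext (bar_of A c))
      = (\<Sum>i<length c. \<Sum>j<length (bar_of A c ! i). \<Sum>x\<in>cut2 [0..<length (bar_of A c ! i ! j)].
          - merge_sign A w (split_at c i (fst (?pm i x)) (snd (?pm i x))) i)"
    unfolding evalf_dext length_bar_of by (intro sum.cong refl) (rule slot_term)
  also have "\<dots> = (\<Sum>i<length c. \<Sum>x\<in>cut2 [0..<length (c ! i)].
          - merge_sign A w (split_at c i (fst (?pm i x)) (snd (?pm i x))) i)"
    by (intro sum.cong refl) (simp add: bar_of_def syms_def)
  also have "\<dots> = (\<Sum>i<length c. \<Sum>q\<in>cut2 (c ! i). - merge_sign A w (split_at c i (fst q) (snd q)) i)"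
  proof (rule sum.cong)
    fix i assume "i \<in> {..<length c}"
    then have "distinct (c ! i)" using dist by auto
    from sum.reindex_bij_betw[OF cut2_positions[OF this],
        of "\<lambda>q. - merge_sign A w (split_at c i (fst q) (snd q)) i"]
    show "(\<Sum>x\<in>cut2 [0..<length (c ! i)]. - merge_sign A w (split_at c i (fst (?pm i x)) (snd (?pm i x))) i)
        = (\<Sum>q\<in>cut2 (c ! i). - merge_sign A w (split_at c i (fst q) (snd q)) i)" by simp
  qed simp
  finally show ?thesis by (simp add: sum_negf)
qed

theorem mainTheorem2:
  fixes A :: "'s list"
  assumes "length A \<ge> 3"
  shows "bar_zero (dB (Tcut A))"
  unfolding bar_zero_iff
proof
  fix w :: "'s barb"
  define N where "N = length A"
  have N: "3 \<le> N" using assms N_def by simp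
  let ?s = "\<lambda>b. slotsign b w" and ?C = "cuts [0..<N]"
  have dist: "distinct q" if "c \<in> ?C" "q \<in> set c" for c q
    using cuts_admissible[OF N that(1)] that(2) unfolding admissible_def piece_def
    by (auto simp: strict_sorted_iff)
  have "evalf ?s (dB (Tcut A)) = (\<Sum>c\<in>?C. evalf ?s (dbasis (bar_of A c)))"
    unfolding evalf_dB Tcut_as_sum N_def by (simp add: evalf_sum)
  also have "\<dots> = (\<Sum>c\<in>?C. - (\<Sum>i<length c. \<Sum>q\<in>cut2 (c ! i). merge_sign A w (split_at c i (fst q) (snd q)) i)
                        + (\<Sum>i<length c - 1. merge_sign A w c i))"
    using dist by (intro sum.cong refl) (simp add: evalf_dbasis evalf_dint_bar_of evalf_dext_bar_of)
  also have "\<dots> = 0"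
    using cut_cancellation[OF N, of "merge_sign A w", OF merge_sign_swap]
    by (simp add: sum_subtractf)
  finally show "evalf ?s (dB (Tcut A)) = 0" .
qed

end
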